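(* Consider the linear system $x_{t+1}=Ax_t+Bu_t$ in closed loop with the LMPC policy defined for a prediction horizon $N$. Suppose the stage cost is $h(x,u)=x^\top Qx+u^\top Ru$ with $Q\succeq 0$, $R\succ 0$, that a feasible initial trajectory is given as described below, and that the LICQ condition described below holds. Assume that after $c$ iterations the closed-loop system converges to a fixed-point $(\boldsymbol{x}^\infty,\boldsymbol{u}^\infty)$, i.e. $\boldsymbol{x}^c=\boldsymbol{x}^{c+1}=\dots=\boldsymbol{x}^\infty$ and $\boldsymbol{u}^c=\boldsymbol{u}^{c+1}=\dots=\boldsymbol{u}^\infty$. Then, for all $t\geq 0$ and all $T>0$, the pair $(\boldsymbol{x}^\infty_{t:t+T},\boldsymbol{u}^\infty_{t:t+T-1})=([x_t^\infty,\ldots,x_{t+T}^\infty],[u_t^\infty,\ldots,u_{t+T-1}^\infty])$ is the optimizer of the finite-horizon optimal control problem $$P^*_{t\to t+T}(x_t^\infty,x_{t+T}^\infty)=\min_{u_0,\ldots,u_{T-1}}\sum_{k=0}^{T-1}h(x_k,u_k)$$ subject to $x_{k+1}=Ax_k+Bu_k$, $x_k\in\mathcal{X}$, $u_k\in\mathcal{U}$ for $k=0,\ldots,T-1$, $x_0=x_t^\infty$, $x_T=x_{t+T}^\infty$.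
   Context: System: $x_{t+1}=Ax_t+Bu_t$, $x_t\in\mathbb{R}^n$, $u_t\in\mathbb{R}^d$, with constraints $x_t\in\mathcal{X}=\{x:F_xx\le b_x\}$, $u_t\in\mathcal{U}=\{u:F_uu\le b_u\}$, polyhedra containing the origin in their interior. Stage cost $h(x,u)=x^\top Qx+u^\top Ru$, $Q\succeq0$, $R\succ0$. The task (regulation from a fixed initial state $x_S$) is repeated over iterations $j$; $\boldsymbol{x}^j=[x_0^j,x_1^j,\ldots]$, $\boldsymbol{u}^j=[u_0^j,u_1^j,\ldots]$ are the closed-loop trajectories at iteration $j$, with $x_0^j=x_S$. Convex safe set: $\mathcal{CS}^j=\mathrm{Conv}(\bigcup_{i=0}^j\bigcup_{t\ge0}x_t^i)$. Cost-to-go $J^i_{t\to\infty}(x_t^i)=\sum_{k=t}^\infty h(x_k^i,u_k^i)$. $V$-function: $V^j(x)=\min_{\gamma_k^i\ge0}\sum_{i=0}^j\sum_{k=0}^\infty\gamma_k^iJ^i_{k\to\infty}(x_k^i)$ subject to $\sum_{i,k}\gamma_k^ix_k^i=x$, $\sum_{i,k}\gamma_k^i=1$. Initial trajectory assumption: at iteration $0$ a trajectory $\boldsymbol{x}^0,\boldsymbol{u}^0$ from $x_S$ is given with $x_t^0\in\mathcal{X}$, $u_t^0\in\mathcal{U}$ for all $t$, $x_t^0\to0$, $u_t^0\to0$, and $\sum_t h(x_t^0,u_t^0)<\infty$. LMPC policy at time $t$ of iteration $j$: solve $\min_{u_{t|t},\ldots,u_{t+N-1|t}}\sum_{k=t}^{t+N-1}h(x_{k|t},u_{k|t})+V^{j-1}(x_{t+N|t})$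 subject to $x_{k+1|t}=Ax_{k|t}+Bu_{k|t}$, $x_{k|t}\in\mathcal{X}$, $u_{k|t}\in\mathcal{U}$, $x_{t+N|t}\in\mathcal{CS}^{j-1}$, $x_{t|t}=x_t^j$, and apply the first optimal input $u^{j,*}_{t|t}$ (receding horizon). LICQ assumption: for the given horizon $N$ and for all $t\ge1$, at the optimal solution of the finite-horizon problem $P^*_{t\to t+T}(x_t^\infty,x_{t+T}^\infty)$ with $T=N-1$ (written in terms of the stacked vector $\boldsymbol{z}=\mathrm{Vec}(x_0,u_0,\ldots,x_{T-1},u_{T-1})$ with equality constraints encoding the dynamics, initial and terminal state, and inequality constraints encoding $\mathcal{X},\mathcal{U}$), the gradients of the equality constraints and of the active inequality constraints are linearly independent (the stacked matrix of these gradients has full row rank). *)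

theory Defs
  imports "HOL-Analysis.Analysis"
begin

definition polyset :: "real^'a^'m \<Rightarrow> real^'m \<Rightarrow> (real^'a) set" where
  "polyset F b = {x. \<forall>i. (F *v x) $ i \<le> b $ i}"

definition stage_cost :: "real^'n^'n \<Rightarrow> real^'d^'d \<Rightarrow> real^'n \<Rightarrow> real^'d \<Rightarrow> real" where
  "stage_cost Q R x u = x \<bullet> (Q *v x) + u \<bullet> (R *v u)"

definition cost_to_go ::
  "real^'n^'n \<Rightarrow> real^'d^'d \<Rightarrow> (nat \<Rightarrow> nat \<Rightarrow> real^'n) \<Rightarrow> (nat \<Rightarrow> nat \<Rightarrow> real^'d)
    \<Rightarrow> nat \<Rightarrow> nat \<Rightarrow> real" where
  "cost_to_go Q R xs us i k = (\<Sum>m. stage_cost Q R (xs i (k + m)) (us i (k + m)))"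

definition safe_set :: "(nat \<Rightarrow> nat \<Rightarrow> real^'n) \<Rightarrow> nat \<Rightarrow> (real^'n) set" where
  "safe_set xs j = convex hull (\<Union>i\<in>{..j}. range (xs i))"

definition Vfun ::
  "real^'n^'n \<Rightarrow> real^'d^'d \<Rightarrow> (nat \<Rightarrow> nat \<Rightarrow> real^'n) \<Rightarrow> (nat \<Rightarrow> nat \<Rightarrow> real^'d)
    \<Rightarrow> nat \<Rightarrow> real^'n \<Rightarrow> real" where
  "Vfun Q R xs us j x = Inf {(\<Sum>p\<in>S. \<gamma> p * cost_to_go Q R xs us (fst p) (snd p)) | S \<gamma>.
      finite S \<and> S \<subseteq> {..j} \<times> UNIV \<and> (\<forall>p\<in>S. 0 \<le> \<gamma> p) \<and> sum \<gamma> S = 1 \<and>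
      (\<Sum>p\<in>S. \<gamma> p *\<^sub>R xs (fst p) (snd p)) = x}"

text \<open>LMPC problem at iteration j from state x0 with horizon N: predicted
  state/input sequences xp, up indexed 0..N (relative to current time t).\<close>
definition lmpc_feasible ::
  "real^'n^'n \<Rightarrow> real^'d^'n \<Rightarrow> real^'n^'p \<Rightarrow> real^'p \<Rightarrow> real^'d^'q \<Rightarrow> real^'q
    \<Rightarrow> (nat \<Rightarrow> nat \<Rightarrow> real^'n) \<Rightarrow> nat \<Rightarrow> nat \<Rightarrow> real^'n
    \<Rightarrow> (nat \<Rightarrow> real^'n) \<Rightarrow> (nat \<Rightarrow> real^'d) \<Rightarrow> bool" where
  "lmpc_feasible A B Fx bx Fu bu xs N j x0 xp up \<longleftrightarrow>
     xp 0 = x0 \<and>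
     (\<forall>k<N. xp (Suc k) = A *v xp k + B *v up k \<and> xp k \<in> polyset Fx bx \<and> up k \<in> polyset Fu bu) \<and>
     xp N \<in> safe_set xs (j - 1)"

definition lmpc_cost ::
  "real^'n^'n \<Rightarrow> real^'d^'d \<Rightarrow> (nat \<Rightarrow> nat \<Rightarrow> real^'n) \<Rightarrow> (nat \<Rightarrow> nat \<Rightarrow> real^'d)
    \<Rightarrow> nat \<Rightarrow> nat \<Rightarrow> (nat \<Rightarrow> real^'n) \<Rightarrow> (nat \<Rightarrow> real^'d) \<Rightarrow> real" where
  "lmpc_cost Q R xs us N j xp up =
     (\<Sum>k<N. stage_cost Q R (xp k) (up k)) + Vfun Q R xs us (j - 1) (xp N)"

definition lmpc_optimal ::
  "real^'n^'n \<Rightarrow> real^'d^'n \<Rightarrow> real^'n^'p \<Rightarrow> real^'p \<Rightarrow> real^'d^'q \<Rightarrow> real^'q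
    \<Rightarrow> real^'n^'n \<Rightarrow> real^'d^'d
    \<Rightarrow> (nat \<Rightarrow> nat \<Rightarrow> real^'n) \<Rightarrow> (nat \<Rightarrow> nat \<Rightarrow> real^'d) \<Rightarrow> nat \<Rightarrow> nat \<Rightarrow> real^'n
    \<Rightarrow> (nat \<Rightarrow> real^'n) \<Rightarrow> (nat \<Rightarrow> real^'d) \<Rightarrow> bool" where
  "lmpc_optimal A B Fx bx Fu bu Q R xs us N j x0 xp up \<longleftrightarrow>
     lmpc_feasible A B Fx bx Fu bu xs N j x0 xp up \<and>
     (\<forall>xp' up'. lmpc_feasible A B Fx bx Fu bu xs N j x0 xp' up' \<longrightarrow>
        lmpc_cost Q R xs us N j xp up \<le> lmpc_cost Q R xs us N j xp' up')"

definition fh_feasible ::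
  "real^'n^'n \<Rightarrow> real^'d^'n \<Rightarrow> real^'n^'p \<Rightarrow> real^'p \<Rightarrow> real^'d^'q \<Rightarrow> real^'q
    \<Rightarrow> nat \<Rightarrow> real^'n \<Rightarrow> real^'n \<Rightarrow> (nat \<Rightarrow> real^'n) \<Rightarrow> (nat \<Rightarrow> real^'d) \<Rightarrow> bool" where
  "fh_feasible A B Fx bx Fu bu T x0 xT x u \<longleftrightarrow>
     x 0 = x0 \<and> x T = xT \<and>
     (\<forall>k<T. x (Suc k) = A *v x k + B *v u k \<and> x k \<in> polyset Fx bx \<and> u k \<in> polyset Fu bu)"

definition fh_optimal ::
  "real^'n^'n \<Rightarrow> real^'d^'n \<Rightarrow> real^'n^'p \<Rightarrow> real^'p \<Rightarrow> real^'d^'q \<Rightarrow> real^'q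
    \<Rightarrow> real^'n^'n \<Rightarrow> real^'d^'d
    \<Rightarrow> nat \<Rightarrow> real^'n \<Rightarrow> real^'n \<Rightarrow> (nat \<Rightarrow> real^'n) \<Rightarrow> (nat \<Rightarrow> real^'d) \<Rightarrow> bool" where
  "fh_optimal A B Fx bx Fu bu Q R T x0 xT x u \<longleftrightarrow>
     fh_feasible A B Fx bx Fu bu T x0 xT x u \<and>
     (\<forall>x' u'. fh_feasible A B Fx bx Fu bu T x0 xT x' u' \<longrightarrow>
        (\<Sum>k<T. stage_cost Q R (x k) (u k)) \<le> (\<Sum>k<T. stage_cost Q R (x' k) (u' k)))"

text \<open>LICQ at a point (x,u) of the finite-horizon problem with horizon T, with
  z = Vec(x_0,u_0,...,x_{T-1},u_{T-1}).  Equality constraints: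
  x_0 - x0 = 0 (multiplier l 0), x_{k+1} - A x_k - B u_k = 0 for k = 0..T-2
  (multiplier l (k+1)), xT - A x_{T-1} - B u_{T-1} = 0 (multiplier l T);
  inequality constraints: rows of Fx x_k <= bx and Fu u_k <= bu, k = 0..T-1.
  Linear independence of the gradients of the equality and active inequality
  constraints: the only vanishing linear combination (multipliers of inactive
  rows being zero) is the trivial one.  Block x_k of the combination is
  l k - A^T l (k+1) + Fx^T ex k, block u_k is - B^T l (k+1) + Fu^T eu k.\<close>
definition LICQ_at ::
  "real^'n^'n \<Rightarrow> real^'d^'n \<Rightarrow> real^'n^'p \<Rightarrow> real^'p \<Rightarrow> real^'d^'q \<Rightarrow> real^'q
    \<Rightarrow> nat \<Rightarrow> (nat \<Rightarrow> real^'n) \<Rightarrow> (nat \<Rightarrow> real^'d) \<Rightarrow> bool" where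
  "LICQ_at A B Fx bx Fu bu T x u \<longleftrightarrow>
     (\<forall>(l :: nat \<Rightarrow> real^'n) (ex :: nat \<Rightarrow> real^'p) (eu :: nat \<Rightarrow> real^'q).
        (\<forall>k<T. (\<forall>i. (Fx *v x k) $ i \<noteq> bx $ i \<longrightarrow> ex k $ i = 0) \<and>
               (\<forall>i. (Fu *v u k) $ i \<noteq> bu $ i \<longrightarrow> eu k $ i = 0) \<and>
               l k - transpose A *v l (Suc k) + transpose Fx *v ex k = 0 \<and>
               - (transpose B *v l (Suc k)) + transpose Fu *v eu k = 0)
        \<longrightarrow> (\<forall>k\<le>T. l k = 0) \<and> (\<forall>k<T. ex k = 0 \<and> eu k = 0))"

end

theory Submission
  imports Defs
begin

(*
  At the fixed point the closed-loop cost-to-go of iteration c bounds the cost of every feasible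
  LMPC plan at iteration c + 1 from below (the LMPC cost decreases along the closed loop by at
  least the stage cost), while it is itself at least the stored N-step cost plus the V-function
  at the stored terminal state. Splicing a feasible window of length T <= N into the stored
  trajectory thus shows that every such window of the fixed point is optimal.

  The finite-horizon problem is convex, so optimality of a window is equivalent to nonnegativity
  of the first variation of the cost along every feasible variation (zero at both ends,
  linearised dynamics, inward pointing at active constraints). For windows longer than N, LICQ
  on the window of length N - 1 starting one step later makes the linearised active constraints
  surjective; this splits a feasible variation into one supported on the first N steps and one
  on the window shifted by one step, and induction on the length concludes.
*)

section \<open>Quadratic costs and first variations\<close>

lemma quadratic_form_add_scaled:
  fixes Q :: "real^'n^'n"
  assumes "transpose Q = Q"
  shows "(x + r *\<^sub>R d) \<bullet> (Q *v (x + r *\<^sub>R d))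
           = x \<bullet> (Q *v x) + 2 * r * (x \<bullet> (Q *v d)) + r\<^sup>2 * (d \<bullet> (Q *v d))"
proof -
  have "d \<bullet> (Q *v x) = x \<bullet> (Q *v d)"
    by (metis assms dot_lmul_matrix inner_commute transpose_matrix_vector)
  then show ?thesis
    by (simp add: matrix_vector_right_distrib matrix_vector_mult_scaleR inner_add_left
        inner_add_right power2_eq_square algebra_simps)
qed

lemma stage_cost_add_scaled:
  assumes "transpose Q = Q" "transpose R = R"
  shows "stage_cost Q R (x + r *\<^sub>R dx) (u + r *\<^sub>R du)
           = stage_cost Q R x u + 2 * r * (x \<bullet> (Q *v dx) + u \<bullet> (R *v du))
             + r\<^sup>2 * (dx \<bullet> (Q *v dx) + du \<bullet> (R *v du))"
  unfolding stage_cost_def quadratic_form_add_scaled[OF assms(1)] quadratic_form_add_scaled[OF assms(2)]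
  by (simp add: algebra_simps)

lemma stage_cost_nonneg:
  assumes "\<forall>x. 0 \<le> x \<bullet> (Q *v x)" "\<forall>u. 0 \<le> u \<bullet> (R *v u)"
  shows "0 \<le> stage_cost Q R x u"
  using assms unfolding stage_cost_def by simp

lemma convex_polyset: "convex (polyset F b)"
proof -
  have "polyset F b = (\<Inter>i. {x. (F *v x) $ i \<le> b $ i})"
    unfolding polyset_def by auto
  moreover have "convex {x. (F *v x) $ i \<le> b $ i}" for i
  proof -
    have "{x. (F *v x) $ i \<le> b $ i} = {x. row i F \<bullet> x \<le> b $ i}"
      by (simp add: matrix_vector_mult_def row_def inner_vec_def mult.commute)
    then show ?thesis by (simp add: convex_halfspace_le)
  qed
  ultimately show ?thesis by (simp add: convex_INT)
qed

lemma convex_on_quadratic_form: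
  fixes Q :: "real^'n^'n"
  assumes "transpose Q = Q" "\<forall>x. 0 \<le> x \<bullet> (Q *v x)"
  shows "convex_on UNIV (\<lambda>x. x \<bullet> (Q *v x))"
proof (rule convex_onI)
  fix t :: real and x y :: "real^'n"
  assume "0 < t" "t < 1"
  have combination: "(1 - t) *\<^sub>R x + t *\<^sub>R y = x + t *\<^sub>R (y - x)"
    by (simp add: algebra_simps)
  have endpoint: "y \<bullet> (Q *v y) = x \<bullet> (Q *v x) + 2 * (x \<bullet> (Q *v (y - x))) + (y - x) \<bullet> (Q *v (y - x))"
    using quadratic_form_add_scaled[OF assms(1), of x 1 "y - x"] by simp
  have "0 \<le> t * (1 - t) * ((y - x) \<bullet> (Q *v (y - x)))"
    using \<open>0 < t\<close> \<open>t < 1\<close> assms(2) by simp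
  then show "((1 - t) *\<^sub>R x + t *\<^sub>R y) \<bullet> (Q *v ((1 - t) *\<^sub>R x + t *\<^sub>R y))
               \<le> (1 - t) * (x \<bullet> (Q *v x)) + t * (y \<bullet> (Q *v y))"
    unfolding combination quadratic_form_add_scaled[OF assms(1)] endpoint
    by (simp add: power2_eq_square algebra_simps)
qed simp

lemma stage_cost_convex_sum:
  assumes "transpose Q = Q" "\<forall>x. 0 \<le> x \<bullet> (Q *v x)" "transpose R = R" "\<forall>u. 0 \<le> u \<bullet> (R *v u)"
    and "finite S" "\<forall>p\<in>S. 0 \<le> \<gamma> p" "sum \<gamma> S = 1"
  shows "stage_cost Q R (\<Sum>p\<in>S. \<gamma> p *\<^sub>R x p) (\<Sum>p\<in>S. \<gamma> p *\<^sub>R u p)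
           \<le> (\<Sum>p\<in>S. \<gamma> p * stage_cost Q R (x p) (u p))"
proof -
  have "S \<noteq> {}"
    using \<open>sum \<gamma> S = 1\<close> by auto
  have "(\<Sum>p\<in>S. \<gamma> p *\<^sub>R x p) \<bullet> (Q *v (\<Sum>p\<in>S. \<gamma> p *\<^sub>R x p)) \<le> (\<Sum>p\<in>S. \<gamma> p * (x p \<bullet> (Q *v x p)))"
    using assms \<open>S \<noteq> {}\<close> by (intro convex_on_sum[where C = UNIV] convex_on_quadratic_form) auto
  moreover have "(\<Sum>p\<in>S. \<gamma> p *\<^sub>R u p) \<bullet> (R *v (\<Sum>p\<in>S. \<gamma> p *\<^sub>R u p)) \<le> (\<Sum>p\<in>S. \<gamma> p * (u p \<bullet> (R *v u p)))"
    using assms \<open>S \<noteq> {}\<close> by (intro convex_on_sum[where C = UNIV] convex_on_quadratic_form) auto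
  ultimately show ?thesis
    unfolding stage_cost_def by (simp add: sum.distrib distrib_left)
qed

definition feasible_dir :: "real^'a^'m \<Rightarrow> real^'m \<Rightarrow> real^'a \<Rightarrow> real^'a \<Rightarrow> bool" where
  "feasible_dir F b z d \<longleftrightarrow> (\<forall>i. (F *v z) $ i = b $ i \<longrightarrow> (F *v d) $ i \<le> 0)"

lemma feasible_dir_eventually_in_polyset:
  assumes "z \<in> polyset F b" "feasible_dir F b z d"
  shows "\<forall>\<^sub>F r in at_right 0. z + r *\<^sub>R d \<in> polyset F b"
proof -
  have "\<forall>\<^sub>F r in at_right 0. (F *v z) $ i + r * (F *v d) $ i \<le> b $ i" for i
  proof (cases "(F *v z) $ i = b $ i")
    case True
    then have "(F *v d) $ i \<le> 0"
      using assms(2) unfolding feasible_dir_def by blast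
    with True show ?thesis
      by (auto intro: eventually_mono[OF eventually_at_right_less] simp: mult_nonneg_nonpos)
  next
    case False
    then have "0 < b $ i - (F *v z) $ i"
      using assms(1) unfolding polyset_def by (simp add: order_less_le)
    moreover have "((\<lambda>r. r * (F *v d) $ i) \<longlongrightarrow> 0) (at_right 0)"
      by (auto intro!: tendsto_eq_intros)
    ultimately have "\<forall>\<^sub>F r in at_right 0. r * (F *v d) $ i < b $ i - (F *v z) $ i"
      by (simp add: order_tendstoD(2))
    then show ?thesis
      by (rule eventually_mono) simp
  qed
  then have "\<forall>\<^sub>F r in at_right 0. \<forall>i. (F *v z) $ i + r * (F *v d) $ i \<le> b $ i"
    by (rule eventually_all_finite)
  then show ?thesis
    unfolding polyset_def by (simp add: matrix_vector_right_distrib matrix_vector_mult_scaleR)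
qed

lemma feasible_dir_zero: "feasible_dir F b z 0"
  by (simp add: feasible_dir_def)

lemma feasible_dir_active_rows:
  assumes "\<forall>i. (F *v z) $ i = b $ i \<longrightarrow> (F *v e) $ i = (F *v d) $ i"
  shows "feasible_dir F b z d \<longleftrightarrow> feasible_dir F b z e"
    and "feasible_dir F b z (d - e)"
  using assms by (auto simp: feasible_dir_def matrix_vector_mult_diff_distrib)

definition feasible_variation ::
  "real^'n^'n \<Rightarrow> real^'d^'n \<Rightarrow> real^'n^'p \<Rightarrow> real^'p \<Rightarrow> real^'d^'q \<Rightarrow> real^'q
    \<Rightarrow> nat \<Rightarrow> (nat \<Rightarrow> real^'n) \<Rightarrow> (nat \<Rightarrow> real^'d) \<Rightarrow> (nat \<Rightarrow> real^'n) \<Rightarrow> (nat \<Rightarrow> real^'d) \<Rightarrow> bool" where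
  "feasible_variation A B Fx bx Fu bu T x u dx du \<longleftrightarrow>
     dx 0 = 0 \<and> dx T = 0 \<and>
     (\<forall>k<T. dx (Suc k) = A *v dx k + B *v du k \<and>
            feasible_dir Fx bx (x k) (dx k) \<and> feasible_dir Fu bu (u k) (du k))"

definition cost_variation ::
  "real^'n^'n \<Rightarrow> real^'d^'d \<Rightarrow> nat \<Rightarrow> (nat \<Rightarrow> real^'n) \<Rightarrow> (nat \<Rightarrow> real^'d)
    \<Rightarrow> (nat \<Rightarrow> real^'n) \<Rightarrow> (nat \<Rightarrow> real^'d) \<Rightarrow> real" where
  "cost_variation Q R T x u dx du = (\<Sum>k<T. x k \<bullet> (Q *v dx k) + u k \<bullet> (R *v du k))"

lemma cost_add_scaled_variation:
  assumes "transpose Q = Q" "transpose R = R"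
  shows "(\<Sum>k<T. stage_cost Q R (x k + r *\<^sub>R dx k) (u k + r *\<^sub>R du k))
           = (\<Sum>k<T. stage_cost Q R (x k) (u k)) + 2 * r * cost_variation Q R T x u dx du
             + r\<^sup>2 * (\<Sum>k<T. dx k \<bullet> (Q *v dx k) + du k \<bullet> (R *v du k))"
  unfolding cost_variation_def stage_cost_add_scaled[OF assms]
  by (simp only: sum_distrib_left) (simp only: sum.distrib)

lemma fh_optimal_imp_cost_variation_nonneg:
  assumes Q_sym: "transpose Q = Q" and R_sym: "transpose R = R"
    and opt: "fh_optimal A B Fx bx Fu bu Q R T x0 xT x u"
    and var: "feasible_variation A B Fx bx Fu bu T x u dx du"
  shows "0 \<le> cost_variation Q R T x u dx du"
proof (rule ccontr)
  define g where "g = cost_variation Q R T x u dx du"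
  define q where "q = (\<Sum>k<T. dx k \<bullet> (Q *v dx k) + du k \<bullet> (R *v du k))"
  assume "\<not> 0 \<le> cost_variation Q R T x u dx du"
  then have "2 * g + 0 * q < 0"
    by (simp add: g_def)
  moreover have "((\<lambda>r. 2 * g + r * q) \<longlongrightarrow> 2 * g + 0 * q) (at_right 0)"
    by (intro tendsto_intros)
  ultimately have "\<forall>\<^sub>F r in at_right 0. 2 * g + r * q < 0"
    by (rule order_tendstoD(2)[rotated])
  moreover have "\<forall>\<^sub>F r in at_right 0. \<forall>k\<in>{..<T}.
                   x k + r *\<^sub>R dx k \<in> polyset Fx bx \<and> u k + r *\<^sub>R du k \<in> polyset Fu bu"
    using opt var unfolding fh_optimal_def fh_feasible_def feasible_variation_def
    by (intro eventually_ball_finite ballI eventually_conj feasible_dir_eventually_in_polyset) auto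
  ultimately have "\<forall>\<^sub>F r in at_right 0. (2 * g + r * q < 0 \<and> (\<forall>k\<in>{..<T}.
                   x k + r *\<^sub>R dx k \<in> polyset Fx bx \<and> u k + r *\<^sub>R du k \<in> polyset Fu bu)) \<and> 0 < r"
    by (intro eventually_conj eventually_at_right_less)
  then obtain r :: real where r: "0 < r" "2 * g + r * q < 0"
    and r_in: "\<forall>k<T. x k + r *\<^sub>R dx k \<in> polyset Fx bx \<and> u k + r *\<^sub>R du k \<in> polyset Fu bu"
    using eventually_happens'[OF trivial_limit_at_right_real] by blast
  have "fh_feasible A B Fx bx Fu bu T x0 xT (\<lambda>k. x k + r *\<^sub>R dx k) (\<lambda>k. u k + r *\<^sub>R du k)"
    using opt var r_in unfolding fh_optimal_def fh_feasible_def feasible_variation_def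
    by (simp add: matrix_vector_right_distrib matrix_vector_mult_scaleR scaleR_add_right)
  then have "(\<Sum>k<T. stage_cost Q R (x k) (u k))
               \<le> (\<Sum>k<T. stage_cost Q R (x k + r *\<^sub>R dx k) (u k + r *\<^sub>R du k))"
    using opt unfolding fh_optimal_def by blast
  then have "0 \<le> 2 * r * g + r\<^sup>2 * q"
    unfolding cost_add_scaled_variation[OF Q_sym R_sym] g_def q_def by simp
  also have "\<dots> = r * (2 * g + r * q)"
    by (simp add: power2_eq_square algebra_simps)
  also have "\<dots> < 0"
    using r by (simp add: mult_pos_neg)
  finally show False
    by simp
qed

lemma cost_variation_nonneg_imp_fh_optimal:
  assumes Q_sym: "transpose Q = Q" and Q_psd: "\<forall>x. 0 \<le> x \<bullet> (Q *v x)"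
    and R_sym: "transpose R = R" and R_psd: "\<forall>u. 0 \<le> u \<bullet> (R *v u)"
    and feas: "fh_feasible A B Fx bx Fu bu T x0 xT x u"
    and nonneg: "\<And>dx du. feasible_variation A B Fx bx Fu bu T x u dx du
                   \<Longrightarrow> 0 \<le> cost_variation Q R T x u dx du"
  shows "fh_optimal A B Fx bx Fu bu Q R T x0 xT x u"
  unfolding fh_optimal_def
proof (intro conjI allI impI feas)
  fix x' u'
  assume feas': "fh_feasible A B Fx bx Fu bu T x0 xT x' u'"
  define dx where "dx k = x' k - x k" for k
  define du where "du k = u' k - u k" for k
  have "feasible_variation A B Fx bx Fu bu T x u dx du"
    using feas feas'
    by (auto simp: feasible_variation_def fh_feasible_def feasible_dir_def polyset_def
        dx_def du_def matrix_vector_mult_diff_distrib)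
  then have "0 \<le> cost_variation Q R T x u dx du"
    by (rule nonneg)
  moreover have "0 \<le> (\<Sum>k<T. dx k \<bullet> (Q *v dx k) + du k \<bullet> (R *v du k))"
    using Q_psd R_psd by (simp add: sum_nonneg)
  moreover have "(\<Sum>k<T. stage_cost Q R (x' k) (u' k))
                   = (\<Sum>k<T. stage_cost Q R (x k + 1 *\<^sub>R dx k) (u k + 1 *\<^sub>R du k))"
    by (simp add: dx_def du_def)
  ultimately show "(\<Sum>k<T. stage_cost Q R (x k) (u k)) \<le> (\<Sum>k<T. stage_cost Q R (x' k) (u' k))"
    unfolding cost_add_scaled_variation[OF Q_sym R_sym] by simp
qed

section \<open>Surjectivity of the active constraints under LICQ\<close>

context
  fixes S :: "('i \<Rightarrow> real) set"
  assumes zero: "(\<lambda>i. 0) \<in> S"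
    and add: "\<And>s t. s \<in> S \<Longrightarrow> t \<in> S \<Longrightarrow> (\<lambda>i. s i + t i) \<in> S"
    and scale: "\<And>s r. s \<in> S \<Longrightarrow> (\<lambda>i. r * s i) \<in> S"
begin

lemma linear_combination_in_closed_set:
  assumes "finite J" "\<forall>j\<in>J. t j \<in> S"
  shows "(\<lambda>i. \<Sum>j\<in>J. f j * t j i) \<in> S"
  using assms
proof (induction J rule: finite_induct)
  case empty
  then show ?case using zero by simp
next
  case (insert a J)
  then have "(\<lambda>i. f a * t a i + (\<Sum>j\<in>J. f j * t j i)) \<in> S"
    using add scale by simp
  then show ?case
    using insert by simp
qed

text \<open>The value at \<open>a\<close> is a linear function of the values on \<open>I\<close>; its coefficients give the
  annihilator.\<close>
lemma annihilator_from_dependent_value: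
  assumes "finite I" "a \<notin> I"
    and interpolation: "\<And>c. \<exists>s\<in>S. \<forall>i\<in>I. s i = c i"
    and dependent: "\<forall>w\<in>S. (\<forall>i\<in>I. w i = 0) \<longrightarrow> w a = 0"
  shows "\<exists>y. y a \<noteq> 0 \<and> (\<forall>s\<in>S. (\<Sum>i\<in>insert a I. y i * s i) = 0)"
proof -
  have "\<exists>s\<in>S. \<forall>i\<in>I. s i = (if i = j then 1 else 0)" for j
    by (rule interpolation)
  then obtain t where t: "\<And>j. t j \<in> S" "\<And>j i. i \<in> I \<Longrightarrow> t j i = (if i = j then 1 else 0)"
    by metis
  define y where "y i = (if i = a then -1 else t i a)" for i
  have "y a = -1"
    by (simp add: y_def)
  moreover have "(\<Sum>i\<in>insert a I. y i * s i) = 0" if "s \<in> S" for s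
  proof -
    define w where "w i = s i + (-1) * (\<Sum>j\<in>I. s j * t j i)" for i
    have "w \<in> S"
      unfolding w_def using \<open>s \<in> S\<close> t(1) \<open>finite I\<close>
      by (intro add scale linear_combination_in_closed_set) auto
    moreover have "\<forall>i\<in>I. w i = 0"
    proof
      fix i
      assume "i \<in> I"
      then have "(\<Sum>j\<in>I. s j * t j i) = (\<Sum>j\<in>I. if j = i then s j else 0)"
        using t(2) by (intro sum.cong) auto
      then show "w i = 0"
        using \<open>i \<in> I\<close> \<open>finite I\<close> by (simp add: w_def)
    qed
    ultimately have "w a = 0"
      using dependent by blast
    then have "s a = (\<Sum>j\<in>I. s j * t j a)"
      by (simp add: w_def)
    moreover have "(\<Sum>i\<in>I. y i * s i) = (\<Sum>j\<in>I. s j * t j a)"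
      using \<open>a \<notin> I\<close> by (intro sum.cong) (auto simp: y_def)
    moreover have "(\<Sum>i\<in>insert a I. y i * s i) = y a * s a + (\<Sum>i\<in>I. y i * s i)"
      using \<open>finite I\<close> \<open>a \<notin> I\<close> by simp
    ultimately show ?thesis
      using \<open>y a = -1\<close> by simp
  qed
  ultimately show ?thesis
    by (intro exI[of _ y]) auto
qed

lemma interpolation_from_trivial_annihilator:
  assumes "finite I"
    and trivial: "\<And>y. \<forall>s\<in>S. (\<Sum>i\<in>I. y i * s i) = 0 \<Longrightarrow> \<forall>i\<in>I. y i = 0"
  shows "\<exists>s\<in>S. \<forall>i\<in>I. s i = c i"
  using \<open>finite I\<close> trivial
proof (induction I arbitrary: c rule: finite_induct)
  case empty
  show ?case
    using zero by blast
next
  case (insert a I)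
  have "\<forall>i\<in>I. y i = 0" if "\<forall>s\<in>S. (\<Sum>i\<in>I. y i * s i) = 0" for y
  proof -
    have "(\<Sum>i\<in>insert a I. (y(a := 0)) i * s i) = (\<Sum>i\<in>I. y i * s i)" for s
      using insert.hyps by (auto intro!: sum.cong)
    then have "\<forall>i\<in>insert a I. (y(a := 0)) i = 0"
      using that by (intro insert.prems) simp
    then show ?thesis
      using insert.hyps by (auto split: if_splits)
  qed
  then have interpolation: "\<exists>s\<in>S. \<forall>i\<in>I. s i = c' i" for c'
    by (rule insert.IH)
  show ?case
  proof (cases "\<exists>w\<in>S. (\<forall>i\<in>I. w i = 0) \<and> w a \<noteq> 0")
    case True
    then obtain w where w: "w \<in> S" "\<forall>i\<in>I. w i = 0" "w a \<noteq> 0"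
      by blast
    obtain s where s: "s \<in> S" "\<forall>i\<in>I. s i = c i"
      using interpolation by blast
    define s' where "s' i = s i + ((c a - s a) / w a) * w i" for i
    have "s' \<in> S"
      unfolding s'_def by (rule add[OF s(1) scale[OF w(1)]])
    moreover have "\<forall>i\<in>insert a I. s' i = c i"
      using s(2) w(2,3) by (simp add: s'_def)
    ultimately show ?thesis
      by blast
  next
    case False
    then have "\<forall>w\<in>S. (\<forall>i\<in>I. w i = 0) \<longrightarrow> w a = 0"
      by blast
    then obtain y where "y a \<noteq> 0" "\<forall>s\<in>S. (\<Sum>i\<in>insert a I. y i * s i) = 0"
      using annihilator_from_dependent_value[OF insert.hyps interpolation] by blast
    then show ?thesis
      using insert.prems[of y] by simp
  qed
qed

end

definition dynamics_residual ::
  "real^'n^'n \<Rightarrow> real^'d^'n \<Rightarrow> (nat \<Rightarrow> real^'n) \<Rightarrow> (nat \<Rightarrow> real^'d) \<Rightarrow> nat \<Rightarrow> real^'n" where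
  "dynamics_residual A B vx vu k =
     (case k of 0 \<Rightarrow> vx 0 | Suc k \<Rightarrow> vx (Suc k) - A *v vx k - B *v vu k)"

lemma sum_inner_dynamics_residual:
  assumes "vx L = 0"
  shows "(\<Sum>k\<le>L. l k \<bullet> dynamics_residual A B vx vu k)
           = (\<Sum>k<L. (l k - transpose A *v l (Suc k)) \<bullet> vx k - (transpose B *v l (Suc k)) \<bullet> vu k)"
proof -
  have "(\<Sum>k\<le>L. l k \<bullet> vx k) = l 0 \<bullet> vx 0 + (\<Sum>k<L. l (Suc k) \<bullet> vx (Suc k))"
    by (rule sum.atMost_shift)
  moreover have "(\<Sum>k\<le>L. l k \<bullet> vx k) = (\<Sum>k<L. l k \<bullet> vx k)"
    using assms by (simp add: lessThan_Suc_atMost[symmetric])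
  ultimately have "(\<Sum>k\<le>L. l k \<bullet> dynamics_residual A B vx vu k)
      = (\<Sum>k<L. l k \<bullet> vx k) - (\<Sum>k<L. l (Suc k) \<bullet> (A *v vx k)) - (\<Sum>k<L. l (Suc k) \<bullet> (B *v vu k))"
    by (simp add: sum.atMost_shift dynamics_residual_def inner_diff_right sum_subtractf)
  then show ?thesis
    by (simp add: dot_lmul_matrix inner_diff_left sum_subtractf)
qed

text \<open>Constraint rows of the finite-horizon problem: \<open>Inl (k, i)\<close> is row \<open>i\<close> of the \<open>k\<close>-th
  equality constraint (initial state for \<open>k = 0\<close>, dynamics otherwise), \<open>Inr (Inl (k, i))\<close>
  and \<open>Inr (Inr (k, i))\<close> are row \<open>i\<close> of the state and input constraints at time \<open>k\<close>.\<close>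
type_synonym ('n, 'p, 'q) constraint_row = "(nat \<times> 'n) + (nat \<times> 'p) + (nat \<times> 'q)"

definition constraint_jacobian ::
  "real^'n^'n \<Rightarrow> real^'d^'n \<Rightarrow> real^'n^'p \<Rightarrow> real^'d^'q \<Rightarrow> (nat \<Rightarrow> real^'n) \<Rightarrow> (nat \<Rightarrow> real^'d)
    \<Rightarrow> ('n, 'p, 'q) constraint_row \<Rightarrow> real" where
  "constraint_jacobian A B Fx Fu vx vu =
     case_sum (\<lambda>(k, i). dynamics_residual A B vx vu k $ i)
       (case_sum (\<lambda>(k, i). (Fx *v vx k) $ i) (\<lambda>(k, i). (Fu *v vu k) $ i))"

definition active_rows ::
  "real^'n^'p \<Rightarrow> real^'p \<Rightarrow> real^'d^'q \<Rightarrow> real^'q \<Rightarrow> nat \<Rightarrow> (nat \<Rightarrow> real^'n) \<Rightarrow> (nat \<Rightarrow> real^'d)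
    \<Rightarrow> ('n, 'p, 'q) constraint_row set" where
  "active_rows Fx bx Fu bu L x u =
     ({..L} \<times> UNIV) <+>
     ({p \<in> {..<L} \<times> UNIV. (Fx *v x (fst p)) $ snd p = bx $ snd p} <+>
      {p \<in> {..<L} \<times> UNIV. (Fu *v u (fst p)) $ snd p = bu $ snd p})"

lemma mem_active_rows [simp]:
  "Inl (k, i) \<in> active_rows Fx bx Fu bu L x u \<longleftrightarrow> k \<le> L"
  "Inr (Inl (k, j)) \<in> active_rows Fx bx Fu bu L x u \<longleftrightarrow> k < L \<and> (Fx *v x k) $ j = bx $ j"
  "Inr (Inr (k, m)) \<in> active_rows Fx bx Fu bu L x u \<longleftrightarrow> k < L \<and> (Fu *v u k) $ m = bu $ m"
  by (auto simp: active_rows_def)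

lemma finite_active_rows: "finite (active_rows Fx bx Fu bu L x u)"
  by (simp add: active_rows_def)

lemma constraint_jacobian_add:
  "constraint_jacobian A B Fx Fu (\<lambda>k. vx k + wx k) (\<lambda>k. vu k + wu k)
     = (\<lambda>r. constraint_jacobian A B Fx Fu vx vu r + constraint_jacobian A B Fx Fu wx wu r)"
  by (auto simp: constraint_jacobian_def dynamics_residual_def matrix_vector_right_distrib
      split: sum.split nat.split)

lemma constraint_jacobian_scale:
  "constraint_jacobian A B Fx Fu (\<lambda>k. c *\<^sub>R vx k) (\<lambda>k. c *\<^sub>R vu k)
     = (\<lambda>r. c * constraint_jacobian A B Fx Fu vx vu r)"
  by (auto simp: constraint_jacobian_def dynamics_residual_def matrix_vector_mult_scaleR algebra_simps
      split: sum.split nat.split)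

lemma sum_times_inner:
  fixes v :: "nat \<Rightarrow> real^'m"
  shows "(\<Sum>p\<in>K \<times> UNIV. g (fst p) (snd p) * v (fst p) $ snd p) = (\<Sum>k\<in>K. (\<chi> i. g k i) \<bullet> v k)"
  by (simp add: inner_vec_def sum.cartesian_product case_prod_unfold)

lemma sum_filter_times_inner:
  fixes v :: "nat \<Rightarrow> real^'m"
  assumes "finite K"
  shows "(\<Sum>p\<in>{p \<in> K \<times> UNIV. P (fst p) (snd p)}. g (fst p) (snd p) * v (fst p) $ snd p)
           = (\<Sum>k\<in>K. (\<chi> i. if P k i then g k i else 0) \<bullet> v k)"
proof -
  have "(\<Sum>p\<in>{p \<in> K \<times> UNIV. P (fst p) (snd p)}. g (fst p) (snd p) * v (fst p) $ snd p)
          = (\<Sum>p\<in>K \<times> UNIV. (if P (fst p) (snd p) then g (fst p) (snd p) else 0) * v (fst p) $ snd p)"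
    using assms by (simp add: sum.inter_filter) (rule sum.cong; simp)
  then show ?thesis
    by (simp add: sum_times_inner[where g = "\<lambda>k i. if P k i then g k i else 0"])
qed

lemma sum_active_rows_constraint_jacobian:
  "(\<Sum>r\<in>active_rows Fx bx Fu bu L x u. y r * constraint_jacobian A B Fx Fu vx vu r)
     = (\<Sum>k\<le>L. (\<chi> i. y (Inl (k, i))) \<bullet> dynamics_residual A B vx vu k)
       + (\<Sum>k<L. (\<chi> i. if (Fx *v x k) $ i = bx $ i then y (Inr (Inl (k, i))) else 0) \<bullet> (Fx *v vx k))
       + (\<Sum>k<L. (\<chi> i. if (Fu *v u k) $ i = bu $ i then y (Inr (Inr (k, i))) else 0) \<bullet> (Fu *v vu k))"
  using sum_times_inner[where g = "\<lambda>k i. y (Inl (k, i))" and v = "dynamics_residual A B vx vu"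
      and K = "{..L}"]
    sum_filter_times_inner[where P = "\<lambda>k i. (Fx *v x k) $ i = bx $ i" and K = "{..<L}"
      and g = "\<lambda>k i. y (Inr (Inl (k, i)))" and v = "\<lambda>k. Fx *v vx k"]
    sum_filter_times_inner[where P = "\<lambda>k i. (Fu *v u k) $ i = bu $ i" and K = "{..<L}"
      and g = "\<lambda>k i. y (Inr (Inr (k, i)))" and v = "\<lambda>k. Fu *v vu k"]
  by (simp add: active_rows_def sum.Plus constraint_jacobian_def case_prod_unfold)

lemma LICQ_at_imp_trivial_annihilator:
  assumes licq: "LICQ_at A B Fx bx Fu bu L x u"
    and annihilates: "\<And>vx vu. \<forall>k\<ge>L. vx k = 0 \<and> vu k = 0 \<Longrightarrow>
           (\<Sum>r\<in>active_rows Fx bx Fu bu L x u. y r * constraint_jacobian A B Fx Fu vx vu r) = 0"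
  shows "\<forall>r\<in>active_rows Fx bx Fu bu L x u. y r = 0"
proof -
  define l where "l k = (\<chi> i. y (Inl (k, i)))" for k
  define mx where "mx k = (\<chi> i. if (Fx *v x k) $ i = bx $ i then y (Inr (Inl (k, i))) else 0)" for k
  define mu where "mu k = (\<chi> i. if (Fu *v u k) $ i = bu $ i then y (Inr (Inr (k, i))) else 0)" for k
  define gx where "gx k = l k - transpose A *v l (Suc k) + transpose Fx *v mx k" for k
  define gu where "gu k = - (transpose B *v l (Suc k)) + transpose Fu *v mu k" for k
  have pairing: "(\<Sum>r\<in>active_rows Fx bx Fu bu L x u. y r * constraint_jacobian A B Fx Fu vx vu r)
      = (\<Sum>k<L. gx k \<bullet> vx k + gu k \<bullet> vu k)" if "vx L = 0" for vx vu
    unfolding sum_active_rows_constraint_jacobian[where y = y and x = x and u = u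
        and Fx = Fx and bx = bx and Fu = Fu and bu = bu, folded l_def mx_def mu_def]
      sum_inner_dynamics_residual[where vx = vx and L = L, OF that] gx_def gu_def
    by (simp add: inner_add_left inner_diff_left dot_lmul_matrix sum.distrib sum_subtractf)
  define tx where "tx k = (if k < L then gx k else 0)" for k
  define tu where "tu k = (if k < L then gu k else 0)" for k
  have "(\<Sum>k<L. gx k \<bullet> gx k + gu k \<bullet> gu k) = (\<Sum>k<L. gx k \<bullet> tx k + gu k \<bullet> tu k)"
    by (simp add: tx_def tu_def)
  also have "\<dots> = 0"
    using annihilates[of tx tu] pairing[of tx tu] by (simp add: tx_def tu_def)
  finally have "\<forall>k<L. gx k = 0 \<and> gu k = 0"
    by (simp add: sum_nonneg_eq_0_iff add_nonneg_eq_0_iff)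
  then have "\<forall>k<L. (\<forall>i. (Fx *v x k) $ i \<noteq> bx $ i \<longrightarrow> mx k $ i = 0) \<and>
                   (\<forall>i. (Fu *v u k) $ i \<noteq> bu $ i \<longrightarrow> mu k $ i = 0) \<and>
                   l k - transpose A *v l (Suc k) + transpose Fx *v mx k = 0 \<and>
                   - (transpose B *v l (Suc k)) + transpose Fu *v mu k = 0"
    unfolding gx_def gu_def by (simp add: mx_def mu_def)
  then have "(\<forall>k\<le>L. l k = 0) \<and> (\<forall>k<L. mx k = 0 \<and> mu k = 0)"
    using licq unfolding LICQ_at_def by blast
  moreover have "\<And>k i. y (Inl (k, i)) = l k $ i"
    and "\<And>k j. (Fx *v x k) $ j = bx $ j \<Longrightarrow> y (Inr (Inl (k, j))) = mx k $ j"
    and "\<And>k m. (Fu *v u k) $ m = bu $ m \<Longrightarrow> y (Inr (Inr (k, m))) = mu k $ m"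
    by (simp_all add: l_def mx_def mu_def)
  ultimately show ?thesis
    unfolding active_rows_def by fastforce
qed

lemma LICQ_at_imp_active_rows_onto:
  assumes licq: "LICQ_at A B Fx bx Fu bu L x u"
  shows "\<exists>ex eu. ex 0 = a \<and> (\<forall>k. ex (Suc k) = A *v ex k + B *v eu k) \<and> (\<forall>k\<ge>L. ex k = 0 \<and> eu k = 0) \<and>
           (\<forall>k<L. \<forall>i. (Fx *v x k) $ i = bx $ i \<longrightarrow> (Fx *v ex k) $ i = px k $ i) \<and>
           (\<forall>k<L. \<forall>i. (Fu *v u k) $ i = bu $ i \<longrightarrow> (Fu *v eu k) $ i = pu k $ i)"
proof -
  define S where "S = {constraint_jacobian A B Fx Fu vx vu | vx vu. \<forall>k\<ge>L. vx k = 0 \<and> vu k = 0}"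
  define c where "c = case_sum (\<lambda>(k :: nat, i). if k = 0 then a $ i else 0)
                        (case_sum (\<lambda>(k, i). px k $ i) (\<lambda>(k, i). pu k $ i))"
  have zero: "(\<lambda>r. 0) \<in> S"
    using constraint_jacobian_scale[of A B Fx Fu 0 "\<lambda>k. 0" "\<lambda>k. 0"] unfolding S_def by force
  have add: "(\<lambda>r. s r + t r) \<in> S" if "s \<in> S" "t \<in> S" for s t
    using that unfolding S_def by (force simp: constraint_jacobian_add[symmetric])
  have scale: "(\<lambda>r. c * s r) \<in> S" if "s \<in> S" for s c
    using that unfolding S_def by (force simp: constraint_jacobian_scale[symmetric])
  have trivial: "\<forall>r\<in>active_rows Fx bx Fu bu L x u. y r = 0"
    if "\<forall>s\<in>S. (\<Sum>r\<in>active_rows Fx bx Fu bu L x u. y r * s r) = 0" for y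
    using that by (intro LICQ_at_imp_trivial_annihilator[OF licq]) (auto simp: S_def)
  obtain s where "s \<in> S" "\<forall>r\<in>active_rows Fx bx Fu bu L x u. s r = c r"
    using interpolation_from_trivial_annihilator[OF zero add scale finite_active_rows trivial] by blast
  then obtain vx vu where vanish: "\<forall>k\<ge>L. vx k = 0 \<and> vu k = 0"
    and solves: "\<forall>r\<in>active_rows Fx bx Fu bu L x u. constraint_jacobian A B Fx Fu vx vu r = c r"
    unfolding S_def by blast
  then have row: "constraint_jacobian A B Fx Fu vx vu r = c r"
    if "r \<in> active_rows Fx bx Fu bu L x u" for r
    using that by blast
  have "vx 0 $ i = a $ i" for i
    using row[of "Inl (0, i)"] by (simp add: constraint_jacobian_def dynamics_residual_def c_def)
  then have "vx 0 = a"
    by (simp add: vec_eq_iff)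
  moreover have "vx (Suc k) = A *v vx k + B *v vu k" for k
  proof (cases "k < L")
    case True
    then have "dynamics_residual A B vx vu (Suc k) $ i = 0" for i
      using row[of "Inl (Suc k, i)"] True by (simp add: constraint_jacobian_def c_def)
    then show ?thesis
      by (simp add: vec_eq_iff dynamics_residual_def algebra_simps)
  next
    case False
    then show ?thesis
      using vanish by simp
  qed
  moreover have "\<forall>k<L. \<forall>i. (Fx *v x k) $ i = bx $ i \<longrightarrow> (Fx *v vx k) $ i = px k $ i"
    using row[of "Inr (Inl (k, i))" for k i] by (simp add: constraint_jacobian_def c_def)
  moreover have "\<forall>k<L. \<forall>i. (Fu *v u k) $ i = bu $ i \<longrightarrow> (Fu *v vu k) $ i = pu k $ i"
    using row[of "Inr (Inr (k, i))" for k i] by (simp add: constraint_jacobian_def c_def)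
  ultimately show ?thesis
    using vanish by blast
qed

section \<open>Splitting feasible variations\<close>

lemma feasible_variationD:
  assumes "feasible_variation A B Fx bx Fu bu T x u dx du"
  shows "dx 0 = 0" and "dx T = 0"
    and "k < T \<Longrightarrow> dx (Suc k) = A *v dx k + B *v du k"
    and "k < T \<Longrightarrow> feasible_dir Fx bx (x k) (dx k)"
    and "k < T \<Longrightarrow> feasible_dir Fu bu (u k) (du k)"
  using assms unfolding feasible_variation_def by auto

lemma cost_variation_add:
  assumes "\<And>k. dx k = dx1 k + dx2 k" "\<And>k. du k = du1 k + du2 k"
  shows "cost_variation Q R T x u dx du
           = cost_variation Q R T x u dx1 du1 + cost_variation Q R T x u dx2 du2"
  using assms by (simp add: cost_variation_def matrix_vector_right_distrib inner_add_right sum.distrib)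

lemma cost_variation_vanishing_tail:
  assumes "T' \<le> T" "\<forall>k\<in>{T'..<T}. dx k = 0 \<and> du k = 0"
  shows "cost_variation Q R T x u dx du = cost_variation Q R T' x u dx du"
proof -
  have "{..<T} = {..<T'} \<union> {T'..<T}" "{..<T'} \<inter> {T'..<T} = {}"
    using assms(1) by auto
  then show ?thesis
    using assms(2) by (simp add: cost_variation_def sum.union_disjoint)
qed

lemma cost_variation_Suc_shift:
  "cost_variation Q R (Suc T) x u (case_nat 0 dx) (case_nat 0 du)
     = cost_variation Q R T (\<lambda>k. x (Suc k)) (\<lambda>k. u (Suc k)) dx du"
  unfolding cost_variation_def sum.lessThan_Suc_shift by simp

lemma feasible_variation_head:
  assumes var: "feasible_variation A B Fx bx Fu bu T x u dx du" and "0 < T"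
    and ex0: "ex 0 = dx 1" and ex_step: "\<And>k. ex (Suc k) = A *v ex k + B *v eu k"
    and ex_tail: "\<And>k. L \<le> k \<Longrightarrow> ex k = 0 \<and> eu k = 0"
    and ex_dir: "\<And>k. k < L \<Longrightarrow>
           feasible_dir Fx bx (x (Suc k)) (ex k) \<and> feasible_dir Fu bu (u (Suc k)) (eu k)"
  shows "feasible_variation A B Fx bx Fu bu (Suc L) x u (case_nat 0 ex) (case_nat (du 0) eu)"
  unfolding feasible_variation_def
proof (intro conjI allI impI)
  fix k
  assume "k < Suc L"
  have "dx 0 = 0" "dx 1 = A *v dx 0 + B *v du 0" "feasible_dir Fu bu (u 0) (du 0)"
    using feasible_variationD[OF var] \<open>0 < T\<close> by simp_all
  then show "case_nat 0 ex (Suc k) = A *v case_nat 0 ex k + B *v case_nat (du 0) eu k"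
    and "feasible_dir Fx bx (x k) (case_nat 0 ex k)"
    and "feasible_dir Fu bu (u k) (case_nat (du 0) eu k)"
    using \<open>k < Suc L\<close> ex0 ex_step ex_dir by (auto simp: feasible_dir_zero split: nat.split)
qed (simp_all add: ex_tail)

lemma feasible_variation_tail:
  assumes var: "feasible_variation A B Fx bx Fu bu T x u dx du" and "L < T"
    and ex0: "ex 0 = dx 1" and ex_step: "\<And>k. ex (Suc k) = A *v ex k + B *v eu k"
    and ex_tail: "\<And>k. L \<le> k \<Longrightarrow> ex k = 0 \<and> eu k = 0"
    and rest_dir: "\<And>k. k < L \<Longrightarrow> feasible_dir Fx bx (x (Suc k)) (dx (Suc k) - ex k) \<and>
           feasible_dir Fu bu (u (Suc k)) (du (Suc k) - eu k)"
  shows "feasible_variation A B Fx bx Fu bu (T - 1) (\<lambda>k. x (Suc k)) (\<lambda>k. u (Suc k))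
           (\<lambda>k. dx (Suc k) - ex k) (\<lambda>k. du (Suc k) - eu k)"
  unfolding feasible_variation_def
proof (intro conjI allI impI)
  fix k
  assume "k < T - 1"
  then have "dx (Suc (Suc k)) = A *v dx (Suc k) + B *v du (Suc k)"
    and "feasible_dir Fx bx (x (Suc k)) (dx (Suc k))" "feasible_dir Fu bu (u (Suc k)) (du (Suc k))"
    using feasible_variationD(3-5)[OF var, of "Suc k"] by simp_all
  then show "dx (Suc (Suc k)) - ex (Suc k) = A *v (dx (Suc k) - ex k) + B *v (du (Suc k) - eu k)"
    and "feasible_dir Fx bx (x (Suc k)) (dx (Suc k) - ex k)"
    and "feasible_dir Fu bu (u (Suc k)) (du (Suc k) - eu k)"
    using ex_step[of k] ex_tail[of k] rest_dir[of k] le_less_linear[of L k]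
    by (auto simp: matrix_vector_mult_diff_distrib)
qed (use feasible_variationD(1,2)[OF var] ex0 ex_tail[of "T - 1"] \<open>L < T\<close> in simp_all)

lemma cost_variation_split:
  assumes "dx 0 = 0" and "Suc L \<le> T" and ex_tail: "\<And>k. L \<le> k \<Longrightarrow> ex k = 0 \<and> eu k = 0"
  shows "cost_variation Q R T x u dx du
           = cost_variation Q R (Suc L) x u (case_nat 0 ex) (case_nat (du 0) eu)
             + cost_variation Q R (T - 1) (\<lambda>k. x (Suc k)) (\<lambda>k. u (Suc k))
                 (\<lambda>k. dx (Suc k) - ex k) (\<lambda>k. du (Suc k) - eu k)"
proof -
  obtain T' where T': "T = Suc T'"
    using \<open>Suc L \<le> T\<close> by (cases T) auto
  have "cost_variation Q R T x u dx du
      = cost_variation Q R T x u (case_nat 0 ex) (case_nat (du 0) eu)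
        + cost_variation Q R T x u (case_nat 0 (\<lambda>k. dx (Suc k) - ex k)) (case_nat 0 (\<lambda>k. du (Suc k) - eu k))"
    using \<open>dx 0 = 0\<close> by (intro cost_variation_add) (simp_all split: nat.split)
  also have "cost_variation Q R T x u (case_nat 0 ex) (case_nat (du 0) eu)
      = cost_variation Q R (Suc L) x u (case_nat 0 ex) (case_nat (du 0) eu)"
    using \<open>Suc L \<le> T\<close> ex_tail by (intro cost_variation_vanishing_tail) (auto split: nat.split)
  finally show ?thesis
    unfolding T' cost_variation_Suc_shift by simp
qed

lemma feasible_variation_split:
  assumes licq: "LICQ_at A B Fx bx Fu bu L (\<lambda>k. x (Suc k)) (\<lambda>k. u (Suc k))"
    and "Suc L < T"
    and var: "feasible_variation A B Fx bx Fu bu T x u dx du"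
  obtains dx1 du1 dx2 du2
  where "feasible_variation A B Fx bx Fu bu (Suc L) x u dx1 du1"
    and "feasible_variation A B Fx bx Fu bu (T - 1) (\<lambda>k. x (Suc k)) (\<lambda>k. u (Suc k)) dx2 du2"
    and "cost_variation Q R T x u dx du = cost_variation Q R (Suc L) x u dx1 du1
           + cost_variation Q R (T - 1) (\<lambda>k. x (Suc k)) (\<lambda>k. u (Suc k)) dx2 du2"
proof -
  obtain ex eu where ex0: "ex 0 = dx 1"
    and ex_step: "\<And>k. ex (Suc k) = A *v ex k + B *v eu k"
    and ex_tail: "\<And>k. L \<le> k \<Longrightarrow> ex k = 0 \<and> eu k = 0"
    and rows_x: "\<And>k i. k < L \<Longrightarrow> (Fx *v x (Suc k)) $ i = bx $ i \<Longrightarrow>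
                   (Fx *v ex k) $ i = (Fx *v dx (Suc k)) $ i"
    and rows_u: "\<And>k i. k < L \<Longrightarrow> (Fu *v u (Suc k)) $ i = bu $ i \<Longrightarrow>
                   (Fu *v eu k) $ i = (Fu *v du (Suc k)) $ i"
    using LICQ_at_imp_active_rows_onto[OF licq, of "dx 1" "\<lambda>k. Fx *v dx (Suc k)" "\<lambda>k. Fu *v du (Suc k)"]
    by auto
  have "feasible_dir Fx bx (x (Suc k)) (ex k) \<and> feasible_dir Fu bu (u (Suc k)) (eu k)"
    and "feasible_dir Fx bx (x (Suc k)) (dx (Suc k) - ex k) \<and>
      feasible_dir Fu bu (u (Suc k)) (du (Suc k) - eu k)"
    if "k < L" for k
    using that \<open>Suc L < T\<close> feasible_variationD(4,5)[OF var, of "Suc k"] rows_x[of k] rows_u[of k]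
      feasible_dir_active_rows[where F = Fx and z = "x (Suc k)" and e = "ex k" and d = "dx (Suc k)"]
      feasible_dir_active_rows[where F = Fu and z = "u (Suc k)" and e = "eu k" and d = "du (Suc k)"]
    by auto
  then have "feasible_variation A B Fx bx Fu bu (Suc L) x u (case_nat 0 ex) (case_nat (du 0) eu)"
    and "feasible_variation A B Fx bx Fu bu (T - 1) (\<lambda>k. x (Suc k)) (\<lambda>k. u (Suc k))
      (\<lambda>k. dx (Suc k) - ex k) (\<lambda>k. du (Suc k) - eu k)"
    using \<open>Suc L < T\<close> feasible_variation_head[where L = L, OF var _ ex0 ex_step ex_tail]
      feasible_variation_tail[where L = L, OF var _ ex0 ex_step ex_tail] by simp_all
  moreover have "Suc L \<le> T"
    using \<open>Suc L < T\<close> by simp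
  ultimately show ?thesis
    using that cost_variation_split[where dx = dx and ex = ex and eu = eu and L = L and T = T,
        OF feasible_variationD(1)[OF var] _ ex_tail] by blast
qed

lemma cost_variation_nonneg_every_horizon:
  assumes short: "\<And>s T dx du. T \<le> Suc L \<Longrightarrow>
      feasible_variation A B Fx bx Fu bu T (\<lambda>k. x (s + k)) (\<lambda>k. u (s + k)) dx du \<Longrightarrow>
      0 \<le> cost_variation Q R T (\<lambda>k. x (s + k)) (\<lambda>k. u (s + k)) dx du"
    and licq: "\<And>s. LICQ_at A B Fx bx Fu bu L (\<lambda>k. x (Suc s + k)) (\<lambda>k. u (Suc s + k))"
    and var: "feasible_variation A B Fx bx Fu bu T (\<lambda>k. x (s + k)) (\<lambda>k. u (s + k)) dx du"
  shows "0 \<le> cost_variation Q R T (\<lambda>k. x (s + k)) (\<lambda>k. u (s + k)) dx du"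
  using var
proof (induction T arbitrary: s dx du rule: less_induct)
  case (less T)
  show ?case
  proof (cases "T \<le> Suc L")
    case True
    then show ?thesis
      using short less.prems by blast
  next
    case False
    have licq_s: "LICQ_at A B Fx bx Fu bu L (\<lambda>k. x (s + Suc k)) (\<lambda>k. u (s + Suc k))"
      using licq[of s] by simp
    obtain dx1 du1 dx2 du2
      where "feasible_variation A B Fx bx Fu bu (Suc L) (\<lambda>k. x (s + k)) (\<lambda>k. u (s + k)) dx1 du1"
        and "feasible_variation A B Fx bx Fu bu (T - 1) (\<lambda>k. x (s + Suc k)) (\<lambda>k. u (s + Suc k)) dx2 du2"
        and "cost_variation Q R T (\<lambda>k. x (s + k)) (\<lambda>k. u (s + k)) dx du
               = cost_variation Q R (Suc L) (\<lambda>k. x (s + k)) (\<lambda>k. u (s + k)) dx1 du1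
                 + cost_variation Q R (T - 1) (\<lambda>k. x (s + Suc k)) (\<lambda>k. u (s + Suc k)) dx2 du2"
      by (rule feasible_variation_split[where x = "\<lambda>k. x (s + k)" and u = "\<lambda>k. u (s + k)", OF licq_s _ less.prems])
        (use False in simp)
    moreover have "T - 1 < T"
      using False by simp
    ultimately show ?thesis
      using short[of "Suc L" s] less.IH[of "T - 1" "Suc s"] by simp
  qed
qed

lemma LICQ_at_imp_pos_horizon:
  fixes x :: "nat \<Rightarrow> real^'n"
  assumes "LICQ_at A B Fx bx Fu bu L x u"
  shows "0 < L"
proof (rule ccontr)
  assume "\<not> 0 < L"
  then have "(\<chi> i. (1 :: real)) = (0 :: real^'n)"
    using assms unfolding LICQ_at_def by (auto dest!: spec[of _ "\<lambda>_. \<chi> i. (1 :: real)"])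
  then show False
    by (simp add: vec_eq_iff)
qed

section \<open>The sampled safe set and the \<open>V\<close>-function\<close>

lemma mem_safe_set: "i \<le> j \<Longrightarrow> xs i k \<in> safe_set xs j"
  unfolding safe_set_def by (rule hull_inc) auto

lemma safe_set_representation:
  assumes "x \<in> safe_set xs j"
  obtains S \<gamma> where "finite S" "S \<subseteq> {..j} \<times> UNIV" "\<forall>p\<in>S. 0 \<le> \<gamma> p" "sum \<gamma> S = 1"
    "(\<Sum>p\<in>S. \<gamma> p *\<^sub>R xs (fst p) (snd p)) = x"
proof -
  obtain V w where V: "finite V" "V \<subseteq> (\<Union>i\<in>{..j}. range (xs i))" "\<forall>v\<in>V. 0 \<le> w v"
    "sum w V = 1" "(\<Sum>v\<in>V. w v *\<^sub>R v) = x"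
    using assms unfolding safe_set_def convex_hull_explicit by blast
  define index where "index v = (SOME p. p \<in> {..j} \<times> UNIV \<and> xs (fst p) (snd p) = v)" for v
  have index: "index v \<in> {..j} \<times> UNIV \<and> xs (fst (index v)) (snd (index v)) = v" if v: "v \<in> V" for v
  proof -
    obtain i k where "i \<le> j" "xs i k = v"
      using v V(2) by blast
    then have "\<exists>p. p \<in> {..j} \<times> UNIV \<and> xs (fst p) (snd p) = v"
      by (intro exI[of _ "(i, k)"]) simp
    then show ?thesis
      unfolding index_def by (rule someI_ex)
  qed
  then have "inj_on index V"
    by (metis inj_onI)
  then have "sum (\<lambda>p. w (xs (fst p) (snd p))) (index ` V) = sum w V"
    and "(\<Sum>p\<in>index ` V. w (xs (fst p) (snd p)) *\<^sub>R xs (fst p) (snd p)) = (\<Sum>v\<in>V. w v *\<^sub>R v)"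
    using index by (simp_all add: sum.reindex)
  moreover have "index ` V \<subseteq> {..j} \<times> UNIV" "\<forall>p\<in>index ` V. 0 \<le> w (xs (fst p) (snd p))"
    using index V(3) by (blast, fastforce)
  ultimately show ?thesis
    using V(1,4,5) by (intro that[of "index ` V" "\<lambda>p. w (xs (fst p) (snd p))"]) simp_all
qed

lemma weighted_cost_to_go_nonneg:
  assumes "\<forall>i\<le>j. \<forall>k. 0 \<le> cost_to_go Q R xs us i k" "S \<subseteq> {..j} \<times> UNIV" "\<forall>p\<in>S. 0 \<le> \<gamma> p"
  shows "0 \<le> (\<Sum>p\<in>S. \<gamma> p * cost_to_go Q R xs us (fst p) (snd p))"
  using assms by (auto intro!: sum_nonneg mult_nonneg_nonneg)

lemma Vfun_le:
  assumes nonneg: "\<forall>i\<le>j. \<forall>k. 0 \<le> cost_to_go Q R xs us i k"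
    and "finite S" "inj_on g S" "g ` S \<subseteq> {..j} \<times> UNIV" "\<forall>p\<in>S. 0 \<le> \<gamma> p" "sum \<gamma> S = 1"
  shows "Vfun Q R xs us j (\<Sum>p\<in>S. \<gamma> p *\<^sub>R xs (fst (g p)) (snd (g p)))
           \<le> (\<Sum>p\<in>S. \<gamma> p * cost_to_go Q R xs us (fst (g p)) (snd (g p)))"
proof -
  define x where "x = (\<Sum>p\<in>S. \<gamma> p *\<^sub>R xs (fst (g p)) (snd (g p)))"
  define C where "C = {(\<Sum>p\<in>S. \<gamma> p * cost_to_go Q R xs us (fst p) (snd p)) | S \<gamma>.
      finite S \<and> S \<subseteq> {..j} \<times> UNIV \<and> (\<forall>p\<in>S. 0 \<le> \<gamma> p) \<and> sum \<gamma> S = 1 \<and>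
      (\<Sum>p\<in>S. \<gamma> p *\<^sub>R xs (fst p) (snd p)) = x}"
  define \<gamma>' where "\<gamma>' = \<gamma> \<circ> inv_into S g"
  have \<gamma>': "\<gamma>' (g p) = \<gamma> p" if "p \<in> S" for p
    using \<open>inj_on g S\<close> that by (simp add: \<gamma>'_def)
  have "(\<Sum>q\<in>g ` S. \<gamma>' q * cost_to_go Q R xs us (fst q) (snd q))
          = (\<Sum>p\<in>S. \<gamma> p * cost_to_go Q R xs us (fst (g p)) (snd (g p)))"
    and "(\<Sum>q\<in>g ` S. \<gamma>' q *\<^sub>R xs (fst q) (snd q)) = x"
    and "sum \<gamma>' (g ` S) = 1"
    using \<open>sum \<gamma> S = 1\<close> by (simp_all add: sum.reindex[OF \<open>inj_on g S\<close>] \<gamma>' x_def cong: sum.cong)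
  moreover have "\<forall>q\<in>g ` S. 0 \<le> \<gamma>' q"
    using \<open>\<forall>p\<in>S. 0 \<le> \<gamma> p\<close> by (auto simp: \<gamma>')
  ultimately have "(\<Sum>p\<in>S. \<gamma> p * cost_to_go Q R xs us (fst (g p)) (snd (g p))) \<in> C"
    unfolding C_def using assms(2,4) by (intro CollectI exI[of _ "g ` S"] exI[of _ \<gamma>']) auto
  moreover have "bdd_below C"
    unfolding C_def using weighted_cost_to_go_nonneg[OF nonneg] by (intro bdd_belowI) blast
  ultimately show ?thesis
    unfolding Vfun_def x_def[symmetric] C_def[symmetric] by (rule cInf_lower)
qed

lemma Vfun_nonneg:
  assumes nonneg: "\<forall>i\<le>j. \<forall>k. 0 \<le> cost_to_go Q R xs us i k"
    and "x \<in> safe_set xs j"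
  shows "0 \<le> Vfun Q R xs us j x"
  unfolding Vfun_def
proof (rule cInf_greatest)
  obtain S \<gamma> where "finite S" "S \<subseteq> {..j} \<times> UNIV" "\<forall>p\<in>S. 0 \<le> \<gamma> p" "sum \<gamma> S = 1"
    "(\<Sum>p\<in>S. \<gamma> p *\<^sub>R xs (fst p) (snd p)) = x"
    using safe_set_representation[OF assms(2)] .
  then show "{(\<Sum>p\<in>S. \<gamma> p * cost_to_go Q R xs us (fst p) (snd p)) | S \<gamma>.
      finite S \<and> S \<subseteq> {..j} \<times> UNIV \<and> (\<forall>p\<in>S. 0 \<le> \<gamma> p) \<and> sum \<gamma> S = 1 \<and>
      (\<Sum>p\<in>S. \<gamma> p *\<^sub>R xs (fst p) (snd p)) = x} \<noteq> {}"
    by blast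
qed (use weighted_cost_to_go_nonneg[OF nonneg] in blast)

lemma Vfun_approx:
  assumes "x \<in> safe_set xs j" "0 < e"
  obtains S \<gamma> where "finite S" "S \<subseteq> {..j} \<times> UNIV" "\<forall>p\<in>S. 0 \<le> \<gamma> p" "sum \<gamma> S = 1"
    "(\<Sum>p\<in>S. \<gamma> p *\<^sub>R xs (fst p) (snd p)) = x"
    "(\<Sum>p\<in>S. \<gamma> p * cost_to_go Q R xs us (fst p) (snd p)) < Vfun Q R xs us j x + e"
proof -
  define C where "C = {(\<Sum>p\<in>S. \<gamma> p * cost_to_go Q R xs us (fst p) (snd p)) | S \<gamma>.
      finite S \<and> S \<subseteq> {..j} \<times> UNIV \<and> (\<forall>p\<in>S. 0 \<le> \<gamma> p) \<and> sum \<gamma> S = 1 \<and>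
      (\<Sum>p\<in>S. \<gamma> p *\<^sub>R xs (fst p) (snd p)) = x}"
  obtain S \<gamma> where "finite S" "S \<subseteq> {..j} \<times> UNIV" "\<forall>p\<in>S. 0 \<le> \<gamma> p" "sum \<gamma> S = 1"
    "(\<Sum>p\<in>S. \<gamma> p *\<^sub>R xs (fst p) (snd p)) = x"
    using safe_set_representation[OF assms(1)] .
  then have "C \<noteq> {}"
    unfolding C_def by blast
  moreover have "Inf C < Vfun Q R xs us j x + e"
    using assms(2) unfolding Vfun_def C_def by simp
  ultimately obtain c where "c \<in> C" "c < Vfun Q R xs us j x + e"
    using cInf_lessD by blast
  moreover obtain S' \<gamma>' where "finite S'" "S' \<subseteq> {..j} \<times> UNIV" "\<forall>p\<in>S'. 0 \<le> \<gamma>' p" "sum \<gamma>' S' = 1"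
    "(\<Sum>p\<in>S'. \<gamma>' p *\<^sub>R xs (fst p) (snd p)) = x" "c = (\<Sum>p\<in>S'. \<gamma>' p * cost_to_go Q R xs us (fst p) (snd p))"
    using \<open>c \<in> C\<close> unfolding C_def by blast
  ultimately show ?thesis
    using that[of S' \<gamma>'] by blast
qed

lemma summable_cost_shift:
  "summable (\<lambda>t. stage_cost Q R (xs i t) (us i t))
     \<Longrightarrow> summable (\<lambda>m. stage_cost Q R (xs i (k + m)) (us i (k + m)))"
  using summable_iff_shift[of "\<lambda>t. stage_cost Q R (xs i t) (us i t)" k] by (simp add: add.commute)

lemma cost_to_go_Suc:
  assumes "summable (\<lambda>t. stage_cost Q R (xs i t) (us i t))"
  shows "cost_to_go Q R xs us i k = stage_cost Q R (xs i k) (us i k) + cost_to_go Q R xs us i (Suc k)"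
  unfolding cost_to_go_def using suminf_split_head[OF summable_cost_shift[where xs = xs and us = us and i = i, OF assms]] by simp

lemma cost_to_go_add:
  assumes "summable (\<lambda>t. stage_cost Q R (xs i t) (us i t))"
  shows "cost_to_go Q R xs us i t
           = (\<Sum>k<M. stage_cost Q R (xs i (t + k)) (us i (t + k))) + cost_to_go Q R xs us i (t + M)"
proof (induction M)
  case (Suc M)
  then show ?case
    using cost_to_go_Suc[where xs = xs and us = us and i = i and k = "t + M", OF assms] by simp
qed simp

lemma cost_to_go_nonneg:
  assumes "summable (\<lambda>t. stage_cost Q R (xs i t) (us i t))" "\<forall>x u. 0 \<le> stage_cost Q R x u"
  shows "0 \<le> cost_to_go Q R xs us i k"
  unfolding cost_to_go_def using assms(2) by (intro suminf_nonneg[OF summable_cost_shift[where xs = xs and us = us and i = i, OF assms(1)]]) auto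

section \<open>The LMPC closed loop\<close>

lemma matrix_vector_mult_sum_scaleR:
  "(M :: real^'a^'b) *v (\<Sum>p\<in>S. c p *\<^sub>R v p) = (\<Sum>p\<in>S. c p *\<^sub>R (M *v v p))"
  by (simp add: linear_sum[OF matrix_vector_mul_linear] linear_scale[OF matrix_vector_mul_linear])

locale lmpc_closed_loop =
  fixes A :: "real^'n^'n" and B :: "real^'d^'n"
    and Fx :: "real^'n^'p" and bx :: "real^'p"
    and Fu :: "real^'d^'q" and bu :: "real^'q"
    and Q :: "real^'n^'n" and R :: "real^'d^'d" and N :: nat
    and xs :: "nat \<Rightarrow> nat \<Rightarrow> real^'n" and us :: "nat \<Rightarrow> nat \<Rightarrow> real^'d"
  assumes Q_sym: "transpose Q = Q" and Q_psd: "\<forall>x. 0 \<le> x \<bullet> (Q *v x)"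
    and R_sym: "transpose R = R" and R_psd: "\<forall>u. 0 \<le> u \<bullet> (R *v u)"
    and dyn: "\<forall>j t. xs j (Suc t) = A *v xs j t + B *v us j t"
    and it0_X: "\<forall>t. xs 0 t \<in> polyset Fx bx"
    and it0_U: "\<forall>t. us 0 t \<in> polyset Fu bu"
    and it0_cost: "summable (\<lambda>t. stage_cost Q R (xs 0 t) (us 0 t))"
    and lmpc: "\<forall>j\<ge>1. \<forall>t. \<exists>xp up.
                 lmpc_optimal A B Fx bx Fu bu Q R xs us N j (xs j t) xp up \<and> us j t = up 0"
    and N_pos: "0 < N"
begin

abbreviation "h \<equiv> stage_cost Q R"

lemma h_nonneg: "0 \<le> h x u"
  using stage_cost_nonneg[OF Q_psd R_psd] .

lemma lmpc_plans:
  assumes "1 \<le> j"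
  obtains XP UP where "\<And>t. lmpc_optimal A B Fx bx Fu bu Q R xs us N j (xs j t) (XP t) (UP t)"
    and "\<And>t. us j t = UP t 0"
proof -
  have "\<forall>t. \<exists>xp up. lmpc_optimal A B Fx bx Fu bu Q R xs us N j (xs j t) xp up \<and> us j t = up 0"
    using lmpc assms by blast
  then obtain XP UP where "\<forall>t. lmpc_optimal A B Fx bx Fu bu Q R xs us N j (xs j t) (XP t) (UP t) \<and>
      us j t = UP t 0"
    by metis
  then show ?thesis
    using that by blast
qed

lemma closed_loop_in_constraints: "xs i t \<in> polyset Fx bx \<and> us i t \<in> polyset Fu bu"
proof (cases "i = 0")
  case True
  then show ?thesis
    using it0_X it0_U by simp
next
  case False
  then obtain xp up where "lmpc_optimal A B Fx bx Fu bu Q R xs us N i (xs i t) xp up" "us i t = up 0"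
    using lmpc by (meson less_one not_le)
  then show ?thesis
    using N_pos unfolding lmpc_optimal_def lmpc_feasible_def by auto
qed

lemma safe_set_step:
  assumes summable: "\<forall>i\<le>j. summable (\<lambda>t. h (xs i t) (us i t))"
    and "finite S" "S \<subseteq> {..j} \<times> UNIV" "\<forall>p\<in>S. 0 \<le> \<gamma> p" "sum \<gamma> S = 1"
  defines "x \<equiv> \<Sum>p\<in>S. \<gamma> p *\<^sub>R xs (fst p) (snd p)"
    and "ub \<equiv> \<Sum>p\<in>S. \<gamma> p *\<^sub>R us (fst p) (snd p)"
  shows "x \<in> polyset Fx bx" and "ub \<in> polyset Fu bu"
    and "A *v x + B *v ub \<in> safe_set xs j"
    and "h x ub + Vfun Q R xs us j (A *v x + B *v ub) \<le> (\<Sum>p\<in>S. \<gamma> p * cost_to_go Q R xs us (fst p) (snd p))"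
proof -
  show "x \<in> polyset Fx bx" "ub \<in> polyset Fu bu"
    unfolding x_def ub_def using assms(2,4,5) closed_loop_in_constraints
    by (auto intro!: convex_sum convex_polyset)
  have next_state: "A *v x + B *v ub = (\<Sum>p\<in>S. \<gamma> p *\<^sub>R xs (fst p) (Suc (snd p)))"
    unfolding x_def ub_def matrix_vector_mult_sum_scaleR
    by (simp add: dyn scaleR_add_right sum.distrib)
  then show "A *v x + B *v ub \<in> safe_set xs j"
    using assms(2-5) mem_safe_set[of _ j xs]
    by (auto simp: safe_set_def intro!: convex_sum)
  have "\<forall>i\<le>j. \<forall>k. 0 \<le> cost_to_go Q R xs us i k"
    using summable by (auto intro: cost_to_go_nonneg h_nonneg)
  moreover have "inj_on (\<lambda>p. (fst p, Suc (snd p))) S"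
    by (auto simp: inj_on_def prod_eq_iff)
  moreover have "(\<lambda>p. (fst p, Suc (snd p))) ` S \<subseteq> {..j} \<times> UNIV"
    using assms(3) by auto
  ultimately have "Vfun Q R xs us j (A *v x + B *v ub)
               \<le> (\<Sum>p\<in>S. \<gamma> p * cost_to_go Q R xs us (fst p) (Suc (snd p)))"
    unfolding next_state using Vfun_le[where g = "\<lambda>p. (fst p, Suc (snd p))"] assms(2,4,5) by simp
  moreover have "h x ub \<le> (\<Sum>p\<in>S. \<gamma> p * h (xs (fst p) (snd p)) (us (fst p) (snd p)))"
    unfolding x_def ub_def using assms(2,4,5)
    by (rule stage_cost_convex_sum[OF Q_sym Q_psd R_sym R_psd])
  moreover have "cost_to_go Q R xs us (fst p) (snd p)
      = h (xs (fst p) (snd p)) (us (fst p) (snd p)) + cost_to_go Q R xs us (fst p) (Suc (snd p))"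
    if "p \<in> S" for p
    using that assms(3) summable by (intro cost_to_go_Suc[where xs = xs and us = us]) auto
  then have "(\<Sum>p\<in>S. \<gamma> p * cost_to_go Q R xs us (fst p) (snd p))
      = (\<Sum>p\<in>S. \<gamma> p * h (xs (fst p) (snd p)) (us (fst p) (snd p)))
        + (\<Sum>p\<in>S. \<gamma> p * cost_to_go Q R xs us (fst p) (Suc (snd p)))"
    by (simp add: distrib_left sum.distrib cong: sum.cong)
  ultimately show "h x ub + Vfun Q R xs us j (A *v x + B *v ub)
      \<le> (\<Sum>p\<in>S. \<gamma> p * cost_to_go Q R xs us (fst p) (snd p))"
    by linarith
qed

lemma lmpc_shifted_plan:
  assumes summable: "\<forall>i<j. summable (\<lambda>t. h (xs i t) (us i t))" and "1 \<le> j"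
    and feas: "lmpc_feasible A B Fx bx Fu bu xs N j x0 xp up"
    and S: "finite S" "S \<subseteq> {..j - 1} \<times> UNIV" "\<forall>p\<in>S. 0 \<le> \<gamma> p" "sum \<gamma> S = 1"
      "(\<Sum>p\<in>S. \<gamma> p *\<^sub>R xs (fst p) (snd p)) = xp N"
  obtains xq uq where "lmpc_feasible A B Fx bx Fu bu xs N j (xp 1) xq uq"
    and "lmpc_cost Q R xs us N j xq uq \<le> lmpc_cost Q R xs us N j xp up - h (xp 0) (up 0)
           - Vfun Q R xs us (j - 1) (xp N) + (\<Sum>p\<in>S. \<gamma> p * cost_to_go Q R xs us (fst p) (snd p))"
proof -
  define ub where "ub = (\<Sum>p\<in>S. \<gamma> p *\<^sub>R us (fst p) (snd p))"
  define xq where "xq k = (if k < N then xp (Suc k) else A *v xp N + B *v ub)" for k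
  define uq where "uq k = (if k < N - 1 then up (Suc k) else ub)" for k
  have "\<forall>i\<le>j - 1. summable (\<lambda>t. h (xs i t) (us i t))"
    using summable \<open>1 \<le> j\<close> by auto
  note step = safe_set_step[OF this S(1-4), unfolded S(5), folded ub_def]
  have plan: "\<And>k. k < N \<Longrightarrow> xp (Suc k) = A *v xp k + B *v up k \<and> xp k \<in> polyset Fx bx \<and>
      up k \<in> polyset Fu bu"
    using feas unfolding lmpc_feasible_def by blast
  have "lmpc_feasible A B Fx bx Fu bu xs N j (xp 1) xq uq"
    unfolding lmpc_feasible_def
  proof (intro conjI allI impI)
    fix k
    assume "k < N"
    show "xq (Suc k) = A *v xq k + B *v uq k"
      using plan[of "Suc k"] \<open>k < N\<close> by (cases "Suc k = N") (auto simp: xq_def uq_def)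
    show "xq k \<in> polyset Fx bx"
      using plan[of "Suc k"] step(1) \<open>k < N\<close> by (cases "Suc k = N") (auto simp: xq_def)
    show "uq k \<in> polyset Fu bu"
      using plan[of "Suc k"] step(2) \<open>k < N\<close> by (auto simp: uq_def)
  qed (use N_pos step(3) in \<open>simp_all add: xq_def\<close>)
  moreover have "(\<Sum>k<N. h (xq k) (uq k)) = (\<Sum>k<N - 1. h (xp (Suc k)) (up (Suc k))) + h (xp N) ub"
    using N_pos by (cases N) (simp_all add: xq_def uq_def)
  moreover have "(\<Sum>k<N. h (xp k) (up k)) = h (xp 0) (up 0) + (\<Sum>k<N - 1. h (xp (Suc k)) (up (Suc k)))"
    using N_pos sum.lessThan_Suc_shift[of "\<lambda>k. h (xp k) (up k)" "N - 1"] by simp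
  ultimately show ?thesis
    using that step(4) by (simp add: lmpc_cost_def xq_def)
qed

lemma lmpc_cost_decrease:
  assumes summable: "\<forall>i<j. summable (\<lambda>t. h (xs i t) (us i t))" and "1 \<le> j"
    and opt: "lmpc_optimal A B Fx bx Fu bu Q R xs us N j (xs j t) xp up" "us j t = up 0"
    and opt': "lmpc_optimal A B Fx bx Fu bu Q R xs us N j (xs j (Suc t)) xp' up'"
  shows "lmpc_cost Q R xs us N j xp' up' \<le> lmpc_cost Q R xs us N j xp up - h (xs j t) (us j t)"
proof (rule field_le_epsilon)
  fix e :: real
  assume "0 < e"
  have feas: "lmpc_feasible A B Fx bx Fu bu xs N j (xs j t) xp up"
    using opt(1) unfolding lmpc_optimal_def by blast
  then have xp0: "xp 0 = xs j t" and xpN: "xp N \<in> safe_set xs (j - 1)"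
    and "xp (Suc 0) = A *v xp 0 + B *v up 0"
    using N_pos unfolding lmpc_feasible_def by auto
  then have xp1: "xp 1 = xs j (Suc t)"
    using opt(2) dyn by simp
  obtain S \<gamma> where S: "finite S" "S \<subseteq> {..j - 1} \<times> UNIV" "\<forall>p\<in>S. 0 \<le> \<gamma> p" "sum \<gamma> S = 1"
      "(\<Sum>p\<in>S. \<gamma> p *\<^sub>R xs (fst p) (snd p)) = xp N"
    and close: "(\<Sum>p\<in>S. \<gamma> p * cost_to_go Q R xs us (fst p) (snd p)) < Vfun Q R xs us (j - 1) (xp N) + e"
    by (rule Vfun_approx[OF xpN \<open>0 < e\<close>])
  obtain xq uq where "lmpc_feasible A B Fx bx Fu bu xs N j (xs j (Suc t)) xq uq"
    and shifted: "lmpc_cost Q R xs us N j xq uq \<le> lmpc_cost Q R xs us N j xp up - h (xp 0) (up 0)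
           - Vfun Q R xs us (j - 1) (xp N) + (\<Sum>p\<in>S. \<gamma> p * cost_to_go Q R xs us (fst p) (snd p))"
    by (rule lmpc_shifted_plan[OF summable \<open>1 \<le> j\<close> feas S, unfolded xp1])
  then have "lmpc_cost Q R xs us N j xp' up' \<le> lmpc_cost Q R xs us N j xq uq"
    using opt' unfolding lmpc_optimal_def by blast
  then show "lmpc_cost Q R xs us N j xp' up' \<le> lmpc_cost Q R xs us N j xp up - h (xs j t) (us j t) + e"
    using shifted close unfolding xp0 opt(2) by linarith
qed

lemma lmpc_cost_telescope:
  assumes summable: "\<forall>i<j. summable (\<lambda>t. h (xs i t) (us i t))" and "1 \<le> j"
    and opt: "\<And>t. lmpc_optimal A B Fx bx Fu bu Q R xs us N j (xs j t) (XP t) (UP t)"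
      "\<And>t. us j t = UP t 0"
  shows "(\<Sum>k<M. h (xs j (t + k)) (us j (t + k))) + lmpc_cost Q R xs us N j (XP (t + M)) (UP (t + M))
           \<le> lmpc_cost Q R xs us N j (XP t) (UP t)"
proof (induction M)
  case (Suc M)
  have "lmpc_cost Q R xs us N j (XP (Suc (t + M))) (UP (Suc (t + M)))
          \<le> lmpc_cost Q R xs us N j (XP (t + M)) (UP (t + M)) - h (xs j (t + M)) (us j (t + M))"
    using lmpc_cost_decrease[OF summable \<open>1 \<le> j\<close> opt(1)[of "t + M"] opt(2)[of "t + M"] opt(1)[of "Suc (t + M)"]]
    by blast
  with Suc show ?case
    by simp
qed simp

lemma lmpc_cost_nonneg:
  assumes summable: "\<forall>i<j. summable (\<lambda>t. h (xs i t) (us i t))" and "1 \<le> j"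
    and "lmpc_feasible A B Fx bx Fu bu xs N j x0 xp up"
  shows "0 \<le> lmpc_cost Q R xs us N j xp up"
proof -
  have "\<forall>i\<le>j - 1. \<forall>k. 0 \<le> cost_to_go Q R xs us i k"
    using summable \<open>1 \<le> j\<close> by (auto intro: cost_to_go_nonneg h_nonneg)
  moreover have "xp N \<in> safe_set xs (j - 1)"
    using assms(3) unfolding lmpc_feasible_def by blast
  ultimately have "0 \<le> Vfun Q R xs us (j - 1) (xp N)"
    by (rule Vfun_nonneg)
  then show ?thesis
    unfolding lmpc_cost_def using h_nonneg by (simp add: sum_nonneg)
qed

lemma summable_closed_loop_cost: "summable (\<lambda>t. h (xs i t) (us i t))"
proof (induction i rule: less_induct)
  case (less i)
  show ?case
  proof (cases "i = 0")
    case True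
    then show ?thesis
      using it0_cost by simp
  next
    case False
    then have "1 \<le> i"
      by simp
    then obtain XP UP where opt: "\<And>t. lmpc_optimal A B Fx bx Fu bu Q R xs us N i (xs i t) (XP t) (UP t)"
      "\<And>t. us i t = UP t 0"
      using lmpc_plans by blast
    have "(\<Sum>k<n. h (xs i k) (us i k)) \<le> lmpc_cost Q R xs us N i (XP 0) (UP 0)" for n
      using lmpc_cost_telescope[OF _ \<open>1 \<le> i\<close> opt, where M = n and t = 0] less
        lmpc_cost_nonneg[OF _ \<open>1 \<le> i\<close>, of "xs i n" "XP n" "UP n"] opt(1)[of n]
      unfolding lmpc_optimal_def by fastforce
    then show ?thesis
      by (rule summableI_nonneg_bounded[OF h_nonneg])
  qed
qed

lemma closed_loop_cost_to_go_nonneg: "0 \<le> cost_to_go Q R xs us i k"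
  using h_nonneg by (intro cost_to_go_nonneg[OF summable_closed_loop_cost]) simp

lemma cost_to_go_le_lmpc_cost:
  assumes "1 \<le> j" and feas: "lmpc_feasible A B Fx bx Fu bu xs N j (xs j t) xp up"
  shows "cost_to_go Q R xs us j t \<le> lmpc_cost Q R xs us N j xp up"
proof -
  obtain XP UP where opt: "\<And>t. lmpc_optimal A B Fx bx Fu bu Q R xs us N j (xs j t) (XP t) (UP t)"
    "\<And>t. us j t = UP t 0"
    using lmpc_plans[OF \<open>1 \<le> j\<close>] by blast
  have "(\<Sum>k<n. h (xs j (t + k)) (us j (t + k))) \<le> lmpc_cost Q R xs us N j (XP t) (UP t)" for n
    using lmpc_cost_telescope[OF _ \<open>1 \<le> j\<close> opt, where M = n and t = t] summable_closed_loop_cost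
      lmpc_cost_nonneg[OF _ \<open>1 \<le> j\<close>, of "xs j (t + n)" "XP (t + n)" "UP (t + n)"] opt(1)[of "t + n"]
    unfolding lmpc_optimal_def by fastforce
  then have "cost_to_go Q R xs us j t \<le> lmpc_cost Q R xs us N j (XP t) (UP t)"
    unfolding cost_to_go_def by (intro suminf_le_const summable_cost_shift summable_closed_loop_cost)
  also have "\<dots> \<le> lmpc_cost Q R xs us N j xp up"
    using opt(1)[of t] feas unfolding lmpc_optimal_def by blast
  finally show ?thesis .
qed

lemma Vfun_le_cost_to_go: "i \<le> j \<Longrightarrow> Vfun Q R xs us j (xs i k) \<le> cost_to_go Q R xs us i k"
  using Vfun_le[where S = "{(i, k)}" and g = id and \<gamma> = "\<lambda>_. 1" and j = j and Q = Q and R = R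
      and xs = xs and us = us]
  by (simp add: closed_loop_cost_to_go_nonneg)

lemma fixed_point_lmpc_cost_lower_bound:
  assumes fixed: "xs (Suc c) = xs c" "us (Suc c) = us c"
    and feas: "lmpc_feasible A B Fx bx Fu bu xs N (Suc c) (xs c t) xp up"
  shows "(\<Sum>k<N. h (xs c (t + k)) (us c (t + k))) + Vfun Q R xs us c (xs c (t + N))
           \<le> lmpc_cost Q R xs us N (Suc c) xp up"
proof -
  have "(\<Sum>k<N. h (xs c (t + k)) (us c (t + k))) + Vfun Q R xs us c (xs c (t + N))
          \<le> cost_to_go Q R xs us c t"
    using cost_to_go_add[where xs = xs and us = us and i = c and t = t and M = N,
        OF summable_closed_loop_cost] Vfun_le_cost_to_go[of c c "t + N"]
    by simp
  also have "\<dots> = cost_to_go Q R xs us (Suc c) t"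
    unfolding cost_to_go_def fixed ..
  also have "\<dots> \<le> lmpc_cost Q R xs us N (Suc c) xp up"
    using feas fixed by (intro cost_to_go_le_lmpc_cost) simp_all
  finally show ?thesis .
qed

lemma lmpc_feasible_splice:
  assumes feas: "fh_feasible A B Fx bx Fu bu T (xs c t) (xs c (t + T)) x u" and "T \<le> N"
  defines "xp \<equiv> \<lambda>k. if k \<le> T then x k else xs c (t + k)"
    and "up \<equiv> \<lambda>k. if k < T then u k else us c (t + k)"
  shows "lmpc_feasible A B Fx bx Fu bu xs N (Suc c) (xs c t) xp up"
proof -
  have tail: "xp k = xs c (t + k)" if "T \<le> k" for k
    using that feas unfolding xp_def fh_feasible_def by (cases "k = T") auto
  show ?thesis
    unfolding lmpc_feasible_def
  proof (intro conjI allI impI)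
    fix k
    assume "k < N"
    show "xp (Suc k) = A *v xp k + B *v up k"
      using feas tail[of k] tail[of "Suc k"] dyn
      by (cases "k < T") (auto simp: xp_def up_def fh_feasible_def)
    show "xp k \<in> polyset Fx bx"
      using feas tail[of k] closed_loop_in_constraints
      by (cases "k < T") (auto simp: xp_def fh_feasible_def)
    show "up k \<in> polyset Fu bu"
      using feas closed_loop_in_constraints by (auto simp: up_def fh_feasible_def)
  qed (use feas tail[OF \<open>T \<le> N\<close>] mem_safe_set[of c c xs] in \<open>auto simp: xp_def fh_feasible_def\<close>)
qed

lemma fixed_point_window_optimal:
  assumes fixed: "xs (Suc c) = xs c" "us (Suc c) = us c" and "T \<le> N"
  shows "fh_optimal A B Fx bx Fu bu Q R T (xs c t) (xs c (t + T)) (\<lambda>k. xs c (t + k)) (\<lambda>k. us c (t + k))"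
  unfolding fh_optimal_def
proof (intro conjI allI impI)
  show "fh_feasible A B Fx bx Fu bu T (xs c t) (xs c (t + T)) (\<lambda>k. xs c (t + k)) (\<lambda>k. us c (t + k))"
    unfolding fh_feasible_def using dyn closed_loop_in_constraints by simp
  fix x u
  assume feas: "fh_feasible A B Fx bx Fu bu T (xs c t) (xs c (t + T)) x u"
  define xp where "xp k = (if k \<le> T then x k else xs c (t + k))" for k
  define up where "up k = (if k < T then u k else us c (t + k))" for k
  have "xp N = xs c (t + N)"
    using feas \<open>T \<le> N\<close> unfolding fh_feasible_def xp_def by auto
  then have "(\<Sum>k<N. h (xs c (t + k)) (us c (t + k))) + Vfun Q R xs us c (xs c (t + N))
          \<le> (\<Sum>k<N. h (xp k) (up k)) + Vfun Q R xs us c (xs c (t + N))"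
    using fixed_point_lmpc_cost_lower_bound[OF fixed lmpc_feasible_splice[OF feas \<open>T \<le> N\<close>]]
    unfolding lmpc_cost_def xp_def up_def by simp
  moreover have "(\<Sum>k<N. f k) = (\<Sum>k<T. f k) + (\<Sum>k=T..<N. f k)" for f :: "nat \<Rightarrow> real"
    using \<open>T \<le> N\<close> by (metis atLeast0LessThan sum.atLeastLessThan_concat zero_le)
  moreover have "(\<Sum>k=T..<N. h (xp k) (up k)) = (\<Sum>k=T..<N. h (xs c (t + k)) (us c (t + k)))"
    and "(\<Sum>k<T. h (xp k) (up k)) = (\<Sum>k<T. h (x k) (u k))"
    using feas unfolding fh_feasible_def by (auto simp: xp_def up_def intro!: sum.cong)
  ultimately show "(\<Sum>k<T. h (xs c (t + k)) (us c (t + k))) \<le> (\<Sum>k<T. h (x k) (u k))"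
    by simp
qed

lemma fixed_point_fh_optimal:
  assumes fixed: "xs (Suc c) = xs c" "us (Suc c) = us c"
    and licq: "\<And>s. LICQ_at A B Fx bx Fu bu (N - 1) (\<lambda>k. xs c (Suc s + k)) (\<lambda>k. us c (Suc s + k))"
  shows "fh_optimal A B Fx bx Fu bu Q R T (xs c t) (xs c (t + T)) (\<lambda>k. xs c (t + k)) (\<lambda>k. us c (t + k))"
proof (rule cost_variation_nonneg_imp_fh_optimal[OF Q_sym Q_psd R_sym R_psd])
  show "fh_feasible A B Fx bx Fu bu T (xs c t) (xs c (t + T)) (\<lambda>k. xs c (t + k)) (\<lambda>k. us c (t + k))"
    unfolding fh_feasible_def using dyn closed_loop_in_constraints by simp
  have "0 \<le> cost_variation Q R T (\<lambda>k. xs c (s + k)) (\<lambda>k. us c (s + k)) dx du"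
    if "T \<le> Suc (N - 1)"
      and "feasible_variation A B Fx bx Fu bu T (\<lambda>k. xs c (s + k)) (\<lambda>k. us c (s + k)) dx du"
    for s T dx du
  proof -
    have "T \<le> N"
      using that(1) N_pos by simp
    then show ?thesis
      using fh_optimal_imp_cost_variation_nonneg[OF Q_sym R_sym fixed_point_window_optimal[OF fixed] that(2)]
      by blast
  qed
  then show "0 \<le> cost_variation Q R T (\<lambda>k. xs c (t + k)) (\<lambda>k. us c (t + k)) dx du"
    if "feasible_variation A B Fx bx Fu bu T (\<lambda>k. xs c (t + k)) (\<lambda>k. us c (t + k)) dx du" for dx du
    using cost_variation_nonneg_every_horizon[OF _ licq that] by blast
qed

end

theorem theorem1:
  fixes A :: "real^'n^'n" and B :: "real^'d^'n"
    and Fx :: "real^'n^'p" and bx :: "real^'p"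
    and Fu :: "real^'d^'q" and bu :: "real^'q"
    and Q :: "real^'n^'n" and R :: "real^'d^'d"
    and xS :: "real^'n" and N :: nat and c :: nat
    and xs :: "nat \<Rightarrow> nat \<Rightarrow> real^'n" and us :: "nat \<Rightarrow> nat \<Rightarrow> real^'d"
  assumes X_int: "0 \<in> interior (polyset Fx bx)"
    and U_int: "0 \<in> interior (polyset Fu bu)"
    and Q_sym: "transpose Q = Q" and Q_psd: "\<forall>x. 0 \<le> x \<bullet> (Q *v x)"
    and R_sym: "transpose R = R" and R_pd: "\<forall>u. u \<noteq> 0 \<longrightarrow> 0 < u \<bullet> (R *v u)"
    and init_state: "\<forall>j. xs j 0 = xS"
    and dyn: "\<forall>j t. xs j (Suc t) = A *v xs j t + B *v us j t"
    and it0_X: "\<forall>t. xs 0 t \<in> polyset Fx bx"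
    and it0_U: "\<forall>t. us 0 t \<in> polyset Fu bu"
    and it0_x_lim: "(\<lambda>t. xs 0 t) \<longlonglongrightarrow> 0"
    and it0_u_lim: "(\<lambda>t. us 0 t) \<longlonglongrightarrow> 0"
    and it0_cost: "summable (\<lambda>t. stage_cost Q R (xs 0 t) (us 0 t))"
    and lmpc: "\<forall>j\<ge>1. \<forall>t. \<exists>xp up.
                 lmpc_optimal A B Fx bx Fu bu Q R xs us N j (xs j t) xp up \<and> us j t = up 0"
    and licq: "\<forall>t\<ge>1. \<forall>x u.
                 fh_optimal A B Fx bx Fu bu Q R (N - 1) (xs c t) (xs c (t + (N - 1))) x u
                 \<longrightarrow> LICQ_at A B Fx bx Fu bu (N - 1) x u"
    and fixed_point: "\<forall>j\<ge>c. xs j = xs c \<and> us j = us c"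
  shows "\<forall>t T. 0 < T \<longrightarrow>
           fh_optimal A B Fx bx Fu bu Q R T (xs c t) (xs c (t + T))
             (\<lambda>k. xs c (t + k)) (\<lambda>k. us c (t + k))"
proof -
  have R_psd: "\<forall>u. 0 \<le> u \<bullet> (R *v u)"
    using R_pd by (metis inner_zero_left less_eq_real_def)
  have "0 < N - 1"
  proof (rule ccontr)
    assume "\<not> 0 < N - 1"
    then have "fh_optimal A B Fx bx Fu bu Q R (N - 1) (xs c 1) (xs c (1 + (N - 1))) (\<lambda>_. xs c 1) (\<lambda>_. 0)"
      by (simp add: fh_optimal_def fh_feasible_def)
    then have "0 < N - 1"
      using licq[rule_format, of 1] LICQ_at_imp_pos_horizon by blast
    with \<open>\<not> 0 < N - 1\<close> show False ..
  qed
  then interpret lmpc_closed_loop A B Fx bx Fu bu Q R N xs us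
    by (intro lmpc_closed_loop.intro[OF Q_sym Q_psd R_sym R_psd dyn it0_X it0_U it0_cost lmpc]) simp
  have fixed: "xs (Suc c) = xs c" "us (Suc c) = us c"
    using fixed_point[rule_format, of "Suc c"] by simp_all
  have "LICQ_at A B Fx bx Fu bu (N - 1) (\<lambda>k. xs c (Suc s + k)) (\<lambda>k. us c (Suc s + k))" for s
  proof -
    have "fh_optimal A B Fx bx Fu bu Q R (N - 1) (xs c (Suc s)) (xs c (Suc s + (N - 1)))
        (\<lambda>k. xs c (Suc s + k)) (\<lambda>k. us c (Suc s + k))"
      by (rule fixed_point_window_optimal[OF fixed]) simp
    then show ?thesis
      using licq[rule_format, of "Suc s"] by simp
  qed
  then show ?thesis
    using fixed_point_fh_optimal[OF fixed] by blast
qed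

end
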